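(* Let $f:\mathbb{R}^{3}\to\mathbb{R}$ be quasi normal or quasi split normal. Then for all $x,y,z\in\mathbb{R}$ and $k_{1},k_{2},k_{3}\neq0$: (a) the limits $A(k_{1},y,z)=\lim_{r\to\infty}\int_{-r}^{r}f(x,y,z)e^{-ik_{1}x}dx$, $B(x,k_{2},z)=\lim_{r\to\infty}\int_{-r}^{r}f(x,y,z)e^{-ik_{2}y}dy$, $C(x,y,k_{3})=\lim_{r\to\infty}\int_{-r}^{r}f(x,y,z)e^{-ik_{3}z}dz$ all exist, and $(y,z)\mapsto A(k_{1},y,z)$, $(x,z)\mapsto B(x,k_{2},z)$, $(x,y)\mapsto C(x,y,k_{3})$ are of moderate decrease $3$; (b) the limits $F(k_{1},k_{2},z)=\lim_{r,s\to\infty}\int_{-r}^{r}\int_{-s}^{s}f(x,y,z)e^{-ik_{1}x}e^{-ik_{2}y}dxdy$, $G(k_{1},y,k_{3})=\lim_{r,s\to\infty}\int_{-r}^{r}\int_{-s}^{s}f(x,y,z)e^{-ik_{1}x}e^{-ik_{3}z}dxdz$, $H(x,k_{2},k_{3})=\lim_{r,s\to\infty}\int_{-r}^{r}\int_{-s}^{s}f(x,y,z)e^{-ik_{2}y}e^{-ik_{3}z}dydz$ all exist and are of moderate decrease in their remaining variable; (c) $F(k_{1},k_{2},z)=\int_{-\infty}^{\infty}A(k_{1},y,z)e^{-ik_{2}y}dy=\int_{-\infty}^{\infty}B(x,k_{2},z)e^{-ik_{1}x}dx$, $G(k_{1},y,k_{3})=\int_{-\infty}^{\infty}A(k_{1},y,z)e^{-ik_{3}z}dz=\int_{-\infty}^{\infty}C(x,y,k_{3})e^{-ik_{1}x}dx$,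 $H(x,k_{2},k_{3})=\int_{-\infty}^{\infty}B(x,k_{2},z)e^{-ik_{3}z}dz=\int_{-\infty}^{\infty}C(x,y,k_{3})e^{-ik_{2}y}dy$.
   Context: One-variable: a smooth $g:\mathbb{R}\setminus V\to\mathbb{R}$, $V$ bounded closed, is analytic at infinity if there exist $\epsilon_{1},\epsilon_{2}>0$ with $g(1/t)=\sum_{n\geq1}a_{n}t^{n}$ on $(0,\epsilon_{1})$ and $g(1/t)=\sum_{n\geq1}b_{n}t^{n}$ on $(-\epsilon_{2},0)$, real coefficients, both series absolutely convergent there. A one-variable function is of moderate decrease if $|g(t)|\leq C/t^{2}$ for $|t|>1$. Two variables: for smooth $h:\mathbb{R}^{2}\setminus W\to\mathbb{R}$, $W$ closed bounded: very moderate decrease means $|h(u,v)|\leq C/|(u,v)|$ for $|(u,v)|>1$; moderate decrease $n$ means $|h|\leq C/|(u,v)|^{n}$ for $|(u,v)|>1$ (moderate decrease means $n=2$). With fibres $h_{u}(v)=h(u,v)$, $h_{v}(u)=h(u,v)$: conditions (i) every $h_{u}$ analytic at infinity; (ii) every $h_{v}$ analytic at infinity; (iii) $h$ of very moderate decrease; (iv) $\partial h/\partial u$, $\partial h/\partial v$ of moderate decrease. $h$ is quasi normal if (i)–(iv) and (v)': for sufficiently large $u$ the zeros of $h_{u}$ lie in $(-M_{u},-N_{u})\cup(N_{u},M_{u})$ with $M_{u}-N_{u}$ uniformly bounded, likewise for $(h_{u})',(h_{u})''$ and for $h_{v},(h_{v})',(h_{v})''$. $h$ is quasi split normal if (i)–(iv)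 and (v)'': for sufficiently large $(u,v)$, $h=h_{1}+h_{2}$ with $h_{1},h_{2}$ quasi normal and $h,h_{1},h_{2}$ smooth. Three variables: smooth $f:\mathbb{R}^{3}\to\mathbb{R}$ is of very moderate decrease if $|f(x,y,z)|\leq C/|(x,y,z)|$ for $|(x,y,z)|>1$, of moderate decrease $n$ ($n\geq2$) if $|f|\leq C/|(x,y,z)|^{n}$ there. Fibres: $f_{x}(y,z)=f(x,y,z)$ etc., and $f_{x,y}(z)=f(x,y,z)$, $f_{x,z}(y)$, $f_{y,z}(x)$ similarly. Conditions: (iv) $f$ is of very moderate decrease; (v) for $i+j+k\geq1$, $\frac{\partial^{i+j+k}f}{\partial x^{i}\partial y^{j}\partial z^{k}}$ is of moderate decrease $i+j+k+1$. $f$ is quasi normal if all two-variable fibres $f_{x}(y,z)$, $f_{y}(x,z)$, $f_{z}(x,y)$ are quasi normal, (iv),(v) hold, and (vi)': for sufficiently large $(x,y)$, the zeros of $f_{x,y}$ and of its first four derivatives are contained in a finite union of $S$ intervals of total length $R$, with $S,R$ uniform in $(x,y)$, and similarly for $f_{x,z},f_{y,z}$. $f$ is quasi split normal if all two-variable fibres are quasi split normal, (iv),(v) hold, and (vi)'': for sufficiently large $(x,y)$, $f=f_{1}+f_{2}$ with $f,f_{1},f_{2}$ smooth and $f_{1},f_{2}$ having property (vi)'. *)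

theory Defs
  imports "HOL-Analysis.Analysis"
begin

definition pdu :: "(real \<Rightarrow> real \<Rightarrow> real) \<Rightarrow> real \<Rightarrow> real \<Rightarrow> real" where
  "pdu h = (\<lambda>u v. deriv (\<lambda>t. h t v) u)"
definition pdv :: "(real \<Rightarrow> real \<Rightarrow> real) \<Rightarrow> real \<Rightarrow> real \<Rightarrow> real" where
  "pdv h = (\<lambda>u v. deriv (\<lambda>t. h u t) v)"

datatype coord2 = CU | CV

fun pd2 :: "coord2 list \<Rightarrow> (real \<Rightarrow> real \<Rightarrow> real) \<Rightarrow> real \<Rightarrow> real \<Rightarrow> real" where
  "pd2 [] h = h"
| "pd2 (CU # ds) h = pdu (pd2 ds h)"
| "pd2 (CV # ds) h = pdv (pd2 ds h)"

definition smooth2_on :: "(real \<times> real) set \<Rightarrow> (real \<Rightarrow> real \<Rightarrow> real) \<Rightarrow> bool" where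
  "smooth2_on U h \<longleftrightarrow> open U \<and>
     (\<forall>ds. continuous_on U (\<lambda>(u,v). pd2 ds h u v) \<and>
       (\<forall>u v. (u,v) \<in> U \<longrightarrow>
          (\<lambda>t. pd2 ds h t v) differentiable (at u) \<and>
          (\<lambda>t. pd2 ds h u t) differentiable (at v)))"

definition pdx :: "(real \<Rightarrow> real \<Rightarrow> real \<Rightarrow> real) \<Rightarrow> real \<Rightarrow> real \<Rightarrow> real \<Rightarrow> real" where
  "pdx f = (\<lambda>x y z. deriv (\<lambda>t. f t y z) x)"
definition pdy :: "(real \<Rightarrow> real \<Rightarrow> real \<Rightarrow> real) \<Rightarrow> real \<Rightarrow> real \<Rightarrow> real \<Rightarrow> real" where
  "pdy f = (\<lambda>x y z. deriv (\<lambda>t. f x t z) y)"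
definition pdz :: "(real \<Rightarrow> real \<Rightarrow> real \<Rightarrow> real) \<Rightarrow> real \<Rightarrow> real \<Rightarrow> real \<Rightarrow> real" where
  "pdz f = (\<lambda>x y z. deriv (\<lambda>t. f x y t) z)"

datatype coord3 = CX | CY | CZ

fun pd3 :: "coord3 list \<Rightarrow> (real \<Rightarrow> real \<Rightarrow> real \<Rightarrow> real) \<Rightarrow> real \<Rightarrow> real \<Rightarrow> real \<Rightarrow> real" where
  "pd3 [] f = f"
| "pd3 (CX # ds) f = pdx (pd3 ds f)"
| "pd3 (CY # ds) f = pdy (pd3 ds f)"
| "pd3 (CZ # ds) f = pdz (pd3 ds f)"

definition smooth3 :: "(real \<Rightarrow> real \<Rightarrow> real \<Rightarrow> real) \<Rightarrow> bool" where
  "smooth3 f \<longleftrightarrow>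
     (\<forall>ds. continuous_on UNIV (\<lambda>(x,y,z). pd3 ds f x y z) \<and>
       (\<forall>x y z. (\<lambda>t. pd3 ds f t y z) differentiable (at x) \<and>
                (\<lambda>t. pd3 ds f x t z) differentiable (at y) \<and>
                (\<lambda>t. pd3 ds f x y t) differentiable (at z)))"

definition pd3ijk :: "nat \<Rightarrow> nat \<Rightarrow> nat \<Rightarrow> (real \<Rightarrow> real \<Rightarrow> real \<Rightarrow> real) \<Rightarrow> real \<Rightarrow> real \<Rightarrow> real \<Rightarrow> real" where
  "pd3ijk i j k f = pd3 (replicate i CX @ replicate j CY @ replicate k CZ) f"

definition mod_dec1 :: "(real \<Rightarrow> 'a::real_normed_vector) \<Rightarrow> bool" where
  "mod_dec1 g \<longleftrightarrow> (\<exists>C. \<forall>t. \<bar>t\<bar> > 1 \<longrightarrow> norm (g t) \<le> C / t^2)"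

text \<open>Two variables, function defined on R^2 minus W: decrease of order n
  (n = 1: very moderate decrease, n = 2: moderate decrease).\<close>
definition mod_dec2 :: "(real \<times> real) set \<Rightarrow> nat \<Rightarrow> (real \<Rightarrow> real \<Rightarrow> 'a::real_normed_vector) \<Rightarrow> bool" where
  "mod_dec2 W n h \<longleftrightarrow> (\<exists>C. \<forall>u v. (u,v) \<notin> W \<and> norm (u,v) > 1 \<longrightarrow> norm (h u v) \<le> C / norm (u,v)^n)"

text \<open>Three variables: decrease of order n (n = 1: very moderate decrease).\<close>
definition mod_dec3 :: "nat \<Rightarrow> (real \<Rightarrow> real \<Rightarrow> real \<Rightarrow> real) \<Rightarrow> bool" where
  "mod_dec3 n f \<longleftrightarrow> (\<exists>C. \<forall>x y z. norm (x,y,z) > 1 \<longrightarrow> \<bar>f x y z\<bar> \<le> C / norm (x,y,z)^n)"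

text \<open>g defined on R minus V (V bounded closed); series indexed from n = 1.\<close>
definition analytic_at_inf :: "real set \<Rightarrow> (real \<Rightarrow> real) \<Rightarrow> bool" where
  "analytic_at_inf V g \<longleftrightarrow> (\<exists>e1 e2 (a::nat \<Rightarrow> real) (b::nat \<Rightarrow> real). e1 > 0 \<and> e2 > 0 \<and>
     (\<forall>t. 0 < t \<and> t < e1 \<longrightarrow> 1/t \<notin> V \<and> summable (\<lambda>n. \<bar>a n * t ^ Suc n\<bar>) \<and>
          g (1/t) = (\<Sum>n. a n * t ^ Suc n)) \<and>
     (\<forall>t. -e2 < t \<and> t < 0 \<longrightarrow> 1/t \<notin> V \<and> summable (\<lambda>n. \<bar>b n * t ^ Suc n\<bar>) \<and>
          g (1/t) = (\<Sum>n. b n * t ^ Suc n)))"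

definition cond_v' :: "(real \<times> real) set \<Rightarrow> (real \<Rightarrow> real \<Rightarrow> real) \<Rightarrow> bool" where
  "cond_v' W h \<longleftrightarrow> (\<exists>U0 D.
     (\<forall>u. \<bar>u\<bar> > U0 \<longrightarrow> (\<forall>j\<le>2. \<exists>M N. M - N \<le> D \<and>
        {v. (u,v) \<notin> W \<and> (deriv ^^ j) (\<lambda>v. h u v) v = 0} \<subseteq> {-M<..<-N} \<union> {N<..<M})) \<and>
     (\<forall>v. \<bar>v\<bar> > U0 \<longrightarrow> (\<forall>j\<le>2. \<exists>M N. M - N \<le> D \<and>
        {u. (u,v) \<notin> W \<and> (deriv ^^ j) (\<lambda>u. h u v) u = 0} \<subseteq> {-M<..<-N} \<union> {N<..<M})))"

definition base2 :: "(real \<times> real) set \<Rightarrow> (real \<Rightarrow> real \<Rightarrow> real) \<Rightarrow> bool" where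
  "base2 W h \<longleftrightarrow> closed W \<and> bounded W \<and> smooth2_on (- W) h \<and>
     (\<forall>u. analytic_at_inf {v. (u,v) \<in> W} (\<lambda>v. h u v)) \<and>
     (\<forall>v. analytic_at_inf {u. (u,v) \<in> W} (\<lambda>u. h u v)) \<and>
     mod_dec2 W 1 h \<and> mod_dec2 W 2 (pdu h) \<and> mod_dec2 W 2 (pdv h)"

definition quasi_normal2 :: "(real \<times> real) set \<Rightarrow> (real \<Rightarrow> real \<Rightarrow> real) \<Rightarrow> bool" where
  "quasi_normal2 W h \<longleftrightarrow> base2 W h \<and> cond_v' W h"

definition quasi_split_normal2 :: "(real \<times> real) set \<Rightarrow> (real \<Rightarrow> real \<Rightarrow> real) \<Rightarrow> bool" where
  "quasi_split_normal2 W h \<longleftrightarrow> base2 W h \<and>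
     (\<exists>R W1 W2 h1 h2. quasi_normal2 W1 h1 \<and> quasi_normal2 W2 h2 \<and>
        (\<forall>u v. norm (u,v) > R \<longrightarrow> h u v = h1 u v + h2 u v))"

definition covered_by_intervals :: "nat \<Rightarrow> real \<Rightarrow> real set \<Rightarrow> bool" where
  "covered_by_intervals S L Z \<longleftrightarrow> (\<exists>a b :: nat \<Rightarrow> real.
     (\<forall>i<S. a i \<le> b i) \<and> (\<Sum>i<S. b i - a i) \<le> L \<and> Z \<subseteq> (\<Union>i<S. {a i..b i}))"

definition cond_vi' :: "(real \<Rightarrow> real \<Rightarrow> real \<Rightarrow> real) \<Rightarrow> bool" where
  "cond_vi' f \<longleftrightarrow> (\<exists>S L R0.
     (\<forall>x y. norm (x,y) > R0 \<longrightarrow>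
        covered_by_intervals S L {z. \<exists>j\<le>4. (deriv ^^ j) (\<lambda>z. f x y z) z = 0}) \<and>
     (\<forall>x z. norm (x,z) > R0 \<longrightarrow>
        covered_by_intervals S L {y. \<exists>j\<le>4. (deriv ^^ j) (\<lambda>y. f x y z) y = 0}) \<and>
     (\<forall>y z. norm (y,z) > R0 \<longrightarrow>
        covered_by_intervals S L {x. \<exists>j\<le>4. (deriv ^^ j) (\<lambda>x. f x y z) x = 0}))"

definition decay3 :: "(real \<Rightarrow> real \<Rightarrow> real \<Rightarrow> real) \<Rightarrow> bool" where
  "decay3 f \<longleftrightarrow> mod_dec3 1 f \<and>
     (\<forall>i j k. i + j + k \<ge> 1 \<longrightarrow> mod_dec3 (i + j + k + 1) (pd3ijk i j k f))"

definition quasi_normal3 :: "(real \<Rightarrow> real \<Rightarrow> real \<Rightarrow> real) \<Rightarrow> bool" where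
  "quasi_normal3 f \<longleftrightarrow> smooth3 f \<and>
     (\<forall>x. quasi_normal2 {} (\<lambda>y z. f x y z)) \<and>
     (\<forall>y. quasi_normal2 {} (\<lambda>x z. f x y z)) \<and>
     (\<forall>z. quasi_normal2 {} (\<lambda>x y. f x y z)) \<and>
     decay3 f \<and> cond_vi' f"

definition quasi_split_normal3 :: "(real \<Rightarrow> real \<Rightarrow> real \<Rightarrow> real) \<Rightarrow> bool" where
  "quasi_split_normal3 f \<longleftrightarrow> smooth3 f \<and>
     (\<forall>x. quasi_split_normal2 {} (\<lambda>y z. f x y z)) \<and>
     (\<forall>y. quasi_split_normal2 {} (\<lambda>x z. f x y z)) \<and>
     (\<forall>z. quasi_split_normal2 {} (\<lambda>x y. f x y z)) \<and>
     decay3 f \<and>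
     (\<exists>R f1 f2. smooth3 f1 \<and> smooth3 f2 \<and> cond_vi' f1 \<and> cond_vi' f2 \<and>
        (\<forall>x y z. norm (x,y,z) > R \<longrightarrow> f x y z = f1 x y z + f2 x y z))"

definition ef :: "real \<Rightarrow> real \<Rightarrow> complex" where
  "ef k t = exp (- (\<i> * complex_of_real (k * t)))"

end

theory Submission
  imports Defs
begin

text \<open>
Only smoothness and the decay conditions (iv) and (v) of f enter the proof.

Integrating by parts three times in x replaces the truncated transform of f by that of its third
x-derivative, up to boundary terms at x = -s, s which vanish as s grows because the lower
derivatives decay. The third derivative decays like |p|^-4, so it is absolutely integrable in x
and its transform is bounded by a multiple of (1 + y^2 + z^2)^(-3/2); this gives (a).

For (b) and (c), the same expansion shows that for fixed y the truncated inner integral over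
[-s, s] differs from its limit A(y) by O(1/(s^2 + y^2)) plus the boundary term at x = -s, s.
One more integration by parts, now in y, makes the transform of that boundary term O(1/s)
uniformly in the outer cut-off r. Hence the truncated double integrals converge to the integral
of A(y) e^(-i k2 y), and Fubini on rectangles identifies this limit with the one taken in the
other order. Permuting the arguments of f reduces every direction to the first one.
\<close>

lemma continuous_on_fix_fst:
  assumes "continuous_on UNIV (\<lambda>(x, y). h x y)"
  shows "continuous_on S (h x)"
  using continuous_on_compose2[OF assms continuous_on_Pair[OF continuous_on_const continuous_on_id]]
  by auto

lemma continuous_on_permute3:
  fixes D :: "real \<Rightarrow> real \<Rightarrow> real \<Rightarrow> 'a::topological_space"
  assumes "continuous_on UNIV (\<lambda>(x, y, z). D x y z)"
  shows "continuous_on UNIV (\<lambda>(x, z, y). D x y z)" "continuous_on UNIV (\<lambda>(y, x, z). D x y z)"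
    "continuous_on UNIV (\<lambda>(z, x, y). D x y z)"
proof -
  have "continuous_on UNIV (\<lambda>p. (\<lambda>(x, y, z). D x y z) (fst p, snd (snd p), fst (snd p)))"
    "continuous_on UNIV (\<lambda>p. (\<lambda>(x, y, z). D x y z) (fst (snd p), fst p, snd (snd p)))"
    "continuous_on UNIV (\<lambda>p. (\<lambda>(x, y, z). D x y z) (fst (snd p), snd (snd p), fst p))"
    by (rule continuous_on_compose2[OF assms]; auto intro!: continuous_intros)+
  then show "continuous_on UNIV (\<lambda>(x, z, y). D x y z)" "continuous_on UNIV (\<lambda>(y, x, z). D x y z)"
    "continuous_on UNIV (\<lambda>(z, x, y). D x y z)"
    by (simp_all add: case_prod_unfold)
qed

lemma continuous_on_integral_interval_param:
  fixes h :: "real \<Rightarrow> real \<Rightarrow> 'a::banach"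
  assumes "continuous_on UNIV (\<lambda>(x, y). h x y)"
  shows "continuous_on UNIV (\<lambda>y. integral {a..b} (\<lambda>x. h x y))"
proof -
  have "continuous_on UNIV (\<lambda>p. (\<lambda>(x, y). h x y) (snd p, fst p))"
    by (rule continuous_on_compose2[OF assms]) (auto intro!: continuous_intros)
  then have "continuous_on (UNIV \<times> cbox a b) (\<lambda>(y, x). h x y)"
    by (auto simp: case_prod_unfold intro: continuous_on_subset)
  then show ?thesis
    using integral_continuous_on_param[of UNIV a b "\<lambda>y x. h x y"] by (simp add: cbox_interval)
qed

lemma integral_symmetric_intervals_swap:
  fixes h :: "real \<Rightarrow> real \<Rightarrow> 'a::banach"
  assumes "continuous_on UNIV (\<lambda>(x, y). h x y)"
  shows "integral {-r..r} (\<lambda>x. integral {-s..s} (\<lambda>y. h x y)) = integral {-s..s} (\<lambda>y. integral {-r..r} (\<lambda>x. h x y))"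
  using integral_swap_continuous[of "-r" "-s" r s h] continuous_on_subset[OF assms]
  by (simp add: cbox_interval)

lemma tendsto_prod_swap:
  assumes "((\<lambda>(r, s). g s r) \<longlongrightarrow> L) (F \<times>\<^sub>F F)"
  shows "((\<lambda>(r, s). g r s) \<longlongrightarrow> L) (F \<times>\<^sub>F F)"
proof -
  have "((\<lambda>(r, s). g r s) \<longlongrightarrow> L) (filtermap prod.swap (F \<times>\<^sub>F F))"
    unfolding filterlim_filtermap using assms by (simp add: case_prod_unfold o_def)
  then show ?thesis
    by (simp flip: prod_filter_commute)
qed

lemma tendsto_prod_at_top_if_dist_le:
  fixes u :: "real \<Rightarrow> real \<Rightarrow> 'a::metric_space"
  assumes dist: "\<And>r s. 0 \<le> r \<Longrightarrow> 1 \<le> s \<Longrightarrow> dist (u r s) (v r) \<le> e s"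
    and "(e \<longlongrightarrow> 0) at_top" and "(v \<longlongrightarrow> L) at_top"
  shows "((\<lambda>(r, s). u r s) \<longlongrightarrow> L) (at_top \<times>\<^sub>F at_top)"
proof (rule tendstoI)
  fix \<epsilon> :: real
  assume "\<epsilon> > 0"
  have "\<forall>\<^sub>F r in at_top. dist (v r) L < \<epsilon> / 2 \<and> 0 \<le> r"
    using \<open>\<epsilon> > 0\<close> by (intro eventually_conj tendstoD[OF assms(3)] eventually_ge_at_top) simp
  moreover have "\<forall>\<^sub>F s in at_top. e s < \<epsilon> / 2 \<and> 1 \<le> s"
    using \<open>\<epsilon> > 0\<close> by (intro eventually_conj order_tendstoD(2)[OF assms(2)] eventually_ge_at_top) simp
  ultimately have "\<forall>\<^sub>F p in at_top \<times>\<^sub>F at_top.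
      (dist (v (fst p)) L < \<epsilon> / 2 \<and> 0 \<le> fst p) \<and> (e (snd p) < \<epsilon> / 2 \<and> 1 \<le> snd p)"
    by (rule eventually_prodI)
  then show "\<forall>\<^sub>F p in at_top \<times>\<^sub>F at_top. dist ((\<lambda>(r, s). u r s) p) L < \<epsilon>"
  proof (rule eventually_mono)
    fix p :: "real \<times> real"
    assume "(dist (v (fst p)) L < \<epsilon> / 2 \<and> 0 \<le> fst p) \<and> (e (snd p) < \<epsilon> / 2 \<and> 1 \<le> snd p)"
    then show "dist ((\<lambda>(r, s). u r s) p) L < \<epsilon>"
      using dist[of "fst p" "snd p"] dist_triangle[of "u (fst p) (snd p)" L "v (fst p)"]
      by (auto simp: case_prod_unfold)
  qed
qed

lemma tendsto_0_at_infinity_if_le_inverse: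
  fixes g :: "real \<Rightarrow> real"
  assumes "\<And>x. 1 \<le> \<bar>x\<bar> \<Longrightarrow> \<bar>g x\<bar> \<le> C / \<bar>x\<bar>"
  shows "(g \<longlongrightarrow> 0) at_infinity"
proof (rule Lim_null_comparison)
  show "\<forall>\<^sub>F x in at_infinity. norm (g x) \<le> C * norm (inverse x)"
    using assms by (auto simp: eventually_at_infinity divide_inverse intro!: exI[of _ 1])
  show "((\<lambda>x::real. C * norm (inverse x)) \<longlongrightarrow> 0) at_infinity"
    by (intro tendsto_mult_right_zero tendsto_norm_zero tendsto_inverse_0)
qed

lemma divide_power_le_divide_power:
  fixes C t r :: real
  assumes "0 \<le> C" "0 < t" "t \<le> r" "1 \<le> r" "m \<le> n"
  shows "C / r ^ n \<le> C / t ^ m"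
proof -
  have "t ^ m \<le> r ^ m"
    using assms by (intro power_mono) auto
  also have "\<dots> \<le> r ^ n"
    using assms by (intro power_increasing) auto
  finally show ?thesis
    using assms by (intro divide_left_mono) auto
qed

lemma divide_sqrt_power_le:
  fixes a x K :: real
  assumes "0 \<le> K" "0 < a" "2 \<le> n"
  shows "K / sqrt (a\<^sup>2 + x\<^sup>2) ^ n \<le> K / a ^ (n - 2) / (a\<^sup>2 + x\<^sup>2)"
proof -
  have "a \<le> sqrt (a\<^sup>2 + x\<^sup>2)"
    using \<open>0 < a\<close> by (intro real_le_rsqrt) simp
  then have "a ^ (n - 2) * (a\<^sup>2 + x\<^sup>2) \<le> sqrt (a\<^sup>2 + x\<^sup>2) ^ (n - 2) * sqrt (a\<^sup>2 + x\<^sup>2) ^ 2"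
    using \<open>0 < a\<close> by (intro mult_mono power_mono) auto
  also have "\<dots> = sqrt (a\<^sup>2 + x\<^sup>2) ^ n"
    using \<open>2 \<le> n\<close> by (simp only: power_add[symmetric] le_add_diff_inverse2)
  finally have le: "a ^ (n - 2) * (a\<^sup>2 + x\<^sup>2) \<le> sqrt (a\<^sup>2 + x\<^sup>2) ^ n" .
  have pos: "0 < a ^ (n - 2) * (a\<^sup>2 + x\<^sup>2)"
    using \<open>0 < a\<close> by (simp add: add_pos_nonneg)
  show ?thesis
    unfolding divide_divide_eq_left using le pos \<open>0 \<le> K\<close>
    by (intro divide_left_mono) (auto intro: mult_pos_pos less_le_trans)
qed

section \<open>Integrals over the real line\<close>

lemma has_integral_inverse_sum_squares:
  fixes a :: real
  assumes "a > 0"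
  shows "((\<lambda>x. 1 / (a\<^sup>2 + x\<^sup>2)) has_integral pi / a) UNIV"
proof -
  let ?F = "\<lambda>x. arctan (x / a) / a" and ?f = "\<lambda>x. 1 / (a\<^sup>2 + x\<^sup>2)"
  have pos: "a\<^sup>2 + x\<^sup>2 > 0" for x
    using assms by (simp add: add_pos_nonneg)
  have deriv: "(?F has_real_derivative ?f x) (at x)" for x
  proof -
    have "(?F has_real_derivative inverse (1 + (x / a)\<^sup>2) * (1 / a) / a) (at x)"
      by (intro DERIV_cdivide DERIV_chain2[OF DERIV_arctan]) (auto intro!: derivative_eq_intros)
    moreover have "a * (a * a) + a * (x * x) > 0"
      using assms pos[of x] by (simp add: power2_eq_square flip: distrib_left)
    then have "inverse (1 + (x / a)\<^sup>2) * (1 / a) / a = ?f x"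
      using assms by (simp add: field_simps power2_eq_square)
    ultimately show ?thesis
      by simp
  qed
  have top: "LIM x at_top. x / a :> at_top" and bot: "LIM x at_bot. x / a :> at_bot"
    using assms by (auto intro!: filterlim_tendsto_pos_mult_at_top filterlim_tendsto_pos_mult_at_bot
        filterlim_ident simp: divide_inverse_commute)
  have lim: "(?F \<longlongrightarrow> (pi / 2) / a) at_top" "(?F \<longlongrightarrow> (- (pi / 2)) / a) at_bot"
     by (rule tendsto_divide[OF filterlim_compose[OF tendsto_arctan_at_top top] tendsto_const],
         use assms in simp)
       (rule tendsto_divide[OF filterlim_compose[OF tendsto_arctan_at_bot bot] tendsto_const],
         use assms in simp)
  have cont: "isCont ?f x" for x
    using pos[of x] by (intro continuous_intros) auto
  note FTC = interval_integral_FTC_nonneg[where F = ?F and f = ?f and a = "-\<infinity>" and b = "\<infinity>"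
      and A = "(- (pi / 2)) / a" and B = "(pi / 2) / a"]
  have "set_integrable lborel (einterval (-\<infinity>) \<infinity>) ?f" "(LBINT x=-\<infinity>..\<infinity>. ?f x) = pi / a"
    using FTC deriv lim cont pos by (auto simp: ereal_tendsto_simps1 less_imp_le)
  then show ?thesis
    using set_borel_integral_eq_integral[of UNIV ?f]
    by (simp add: interval_lebesgue_integral_def has_integral_iff)
qed

lemma has_integral_inverse_square:
  fixes s t :: real
  assumes "0 < s" "s \<le> t"
  shows "((\<lambda>x. 1 / x\<^sup>2) has_integral 1 / s - 1 / t) {s..t}"
    and "((\<lambda>x. 1 / x\<^sup>2) has_integral 1 / s - 1 / t) {-t..-s}"
proof -
  have deriv: "((\<lambda>x. - 1 / x) has_vector_derivative 1 / x\<^sup>2) (at x within S)" if "x \<noteq> 0" for x S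
    using that unfolding has_real_derivative_iff_has_vector_derivative[symmetric]
    by (auto intro!: derivative_eq_intros simp: power2_eq_square)
  show "((\<lambda>x. 1 / x\<^sup>2) has_integral 1 / s - 1 / t) {s..t}"
    using fundamental_theorem_of_calculus[of s t "\<lambda>x. - 1 / x"] assms deriv by auto
  show "((\<lambda>x. 1 / x\<^sup>2) has_integral 1 / s - 1 / t) {-t..-s}"
    using fundamental_theorem_of_calculus[of "-t" "-s" "\<lambda>x. - 1 / x"] assms deriv by auto
qed

lemma norm_integral_le_has_integral:
  fixes h :: "'n::euclidean_space \<Rightarrow> 'a::banach"
  assumes "h integrable_on S" "(g has_integral J) S" "\<And>x. x \<in> S \<Longrightarrow> norm (h x) \<le> g x"
  shows "norm (integral S h) \<le> J"
  using integral_norm_bound_integral[OF assms(1) has_integral_integrable[OF assms(2)] assms(3)]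
    integral_unique[OF assms(2)] by simp

lemma tendsto_integral_symmetric_interval:
  fixes h :: "real \<Rightarrow> 'a::banach"
  assumes "h integrable_on UNIV"
  shows "((\<lambda>t. integral {-t..t} h) \<longlongrightarrow> integral UNIV h) at_top"
proof (rule tendstoI)
  fix e :: real
  assume "e > 0"
  then obtain B where "B > 0" and B: "\<And>a b. ball 0 B \<subseteq> cbox a b \<Longrightarrow>
      norm (integral (cbox a b) h - integral UNIV h) < e"
    using integrable_integral[OF assms] unfolding has_integral_alt'[of h _ UNIV] by auto
  have ball: "ball 0 B \<subseteq> cbox (-t) t" if "t \<ge> B" for t :: real
    using that by (auto simp: dist_real_def)
  show "\<forall>\<^sub>F t in at_top. dist (integral {-t..t} h) (integral UNIV h) < e"
    using eventually_ge_at_top[of B] by eventually_elim (use B ball in \<open>simp add: dist_norm\<close>)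
qed

lemma norm_integral_tail_le:
  fixes h :: "real \<Rightarrow> 'a::banach"
  assumes int: "h integrable_on UNIV" and "s > 0"
    and bound: "\<And>x. s \<le> \<bar>x\<bar> \<Longrightarrow> norm (h x) \<le> K / x\<^sup>2"
  shows "norm (integral UNIV h - integral {-s..s} h) \<le> 2 * K / s"
proof (rule Lim_norm_ubound[OF _ tendsto_diff[OF tendsto_integral_symmetric_interval[OF int] tendsto_const]])
  have "K \<ge> 0"
    using order_trans[OF norm_ge_zero bound[of s]] \<open>s > 0\<close> by (simp add: zero_le_divide_iff)
  have bound_t: "norm (integral {-t..t} h - integral {-s..s} h) \<le> 2 * K / s" if "s \<le> t" for t
  proof -
    have tails: "norm (integral I h) \<le> K * (1 / s - 1 / t)" if "I = {s..t} \<or> I = {-t..-s}" for I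
    proof -
      have "((\<lambda>x. K * (1 / x\<^sup>2)) has_integral K * (1 / s - 1 / t)) I"
        using that has_integral_mult_right[OF has_integral_inverse_square(1)[OF \<open>s > 0\<close> \<open>s \<le> t\<close>]]
          has_integral_mult_right[OF has_integral_inverse_square(2)[OF \<open>s > 0\<close> \<open>s \<le> t\<close>]] by auto
      moreover have "h integrable_on I"
        using that by (auto intro: integrable_on_subinterval[OF int])
      ultimately show ?thesis
        using that \<open>s > 0\<close> bound by (auto intro!: norm_integral_le_has_integral)
    qed
    have "integral {-t..-s} h + (integral {-s..s} h + integral {s..t} h) = integral {-t..t} h"
      using \<open>s > 0\<close> \<open>s \<le> t\<close> integrable_on_subinterval[OF int]
      by (simp add: Henstock_Kurzweil_Integration.integral_combine)
    then have "integral {-t..t} h - integral {-s..s} h = integral {-t..-s} h + integral {s..t} h"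
      by (simp add: algebra_simps flip: \<open>_ = integral {-t..t} h\<close>)
    then have "norm (integral {-t..t} h - integral {-s..s} h) \<le> norm (integral {-t..-s} h) + norm (integral {s..t} h)"
      by (simp add: norm_triangle_ineq)
    also have "\<dots> \<le> 2 * K * (1 / s - 1 / t)"
      using tails[of "{-t..-s}"] tails[of "{s..t}"] by simp
    also have "\<dots> \<le> 2 * K / s"
      using \<open>K \<ge> 0\<close> \<open>s > 0\<close> \<open>s \<le> t\<close> by (simp add: field_simps)
    finally show ?thesis .
  qed
  show "\<forall>\<^sub>F t in at_top. norm (integral {-t..t} h - integral {-s..s} h) \<le> 2 * K / s"
    using eventually_ge_at_top[of s] by (rule eventually_mono) (rule bound_t)
qed simp

lemma norm_integral_symmetric_interval_le:
  fixes h :: "real \<Rightarrow> 'a::banach"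
  assumes int: "h integrable_on {-r..r}" and "a > 0" and bound: "\<And>x. norm (h x) \<le> M / (a\<^sup>2 + x\<^sup>2)"
  shows "norm (integral {-r..r} h) \<le> M * pi / a"
proof -
  have "M \<ge> 0"
    using order_trans[OF norm_ge_zero bound[of 0]] \<open>a > 0\<close> by (simp add: zero_le_divide_iff)
  have dom: "((\<lambda>x. M * (1 / (a\<^sup>2 + x\<^sup>2))) has_integral M * (pi / a)) UNIV"
    by (rule has_integral_mult_right[OF has_integral_inverse_sum_squares[OF \<open>a > 0\<close>]])
  then have dom_int: "(\<lambda>x. M * (1 / (a\<^sup>2 + x\<^sup>2))) integrable_on {-r..r}"
    by (auto intro: integrable_on_subinterval has_integral_integrable)
  have "norm (integral {-r..r} h) \<le> integral {-r..r} (\<lambda>x. M * (1 / (a\<^sup>2 + x\<^sup>2)))"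
    using integral_norm_bound_integral[OF int dom_int] bound by simp
  also have "\<dots> \<le> integral UNIV (\<lambda>x. M * (1 / (a\<^sup>2 + x\<^sup>2)))"
    using dom dom_int \<open>M \<ge> 0\<close> \<open>a > 0\<close>
    by (intro integral_subset_le) (auto intro: has_integral_integrable add_pos_nonneg)
  also have "\<dots> = M * pi / a"
    using dom by (simp add: integral_unique)
  finally show ?thesis .
qed

lemma norm_integral_UNIV_le:
  fixes h :: "real \<Rightarrow> 'a::banach"
  assumes int: "h integrable_on UNIV" and "a > 0" and "\<And>x. norm (h x) \<le> M / (a\<^sup>2 + x\<^sup>2)"
  shows "norm (integral UNIV h) \<le> M * pi / a"
  using assms
  by (intro Lim_norm_ubound[OF _ tendsto_integral_symmetric_interval[OF int]] always_eventually
      allI norm_integral_symmetric_interval_le integrable_on_subinterval[OF int]) auto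

lemma integrable_on_UNIV_dominated:
  fixes h :: "real \<Rightarrow> 'a::euclidean_space"
  assumes "continuous_on UNIV h" and "a > 0" and "\<And>x. norm (h x) \<le> M / (a\<^sup>2 + x\<^sup>2)"
  shows "h integrable_on UNIV"
proof -
  have "((\<lambda>x. M * (1 / (a\<^sup>2 + x\<^sup>2))) has_integral M * (pi / a)) UNIV"
    by (rule has_integral_mult_right[OF has_integral_inverse_sum_squares[OF \<open>a > 0\<close>]])
  then have "h absolutely_integrable_on UNIV"
    using assms
    by (intro measurable_bounded_by_integrable_imp_absolutely_integrable[where g = "\<lambda>x. M * (1 / (a\<^sup>2 + x\<^sup>2))"])
      (auto intro: continuous_imp_measurable_on_sets_lebesgue has_integral_integrable)
  then show ?thesis
    by (rule set_lebesgue_integral_eq_integral(1))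
qed

lemma continuous_on_integral_UNIV_param:
  fixes h :: "real \<Rightarrow> real \<Rightarrow> 'a::banach"
  assumes cont: "continuous_on UNIV (\<lambda>(x, y). h x y)"
    and int: "\<And>y. (\<lambda>x. h x y) integrable_on UNIV"
    and bound: "\<And>x y. 1 \<le> \<bar>x\<bar> \<Longrightarrow> norm (h x y) \<le> K / x\<^sup>2"
  shows "continuous_on UNIV (\<lambda>y. integral UNIV (\<lambda>x. h x y))"
proof (rule uniform_limit_theorem[where F = at_top and f = "\<lambda>s y. integral {-s..s} (\<lambda>x. h x y)"])
  show "\<forall>\<^sub>F s in at_top. continuous_on UNIV (\<lambda>y. integral {-s..s} (\<lambda>x. h x y))"
    using continuous_on_integral_interval_param[OF cont] by simp
  show "uniform_limit UNIV (\<lambda>s y. integral {-s..s} (\<lambda>x. h x y)) (\<lambda>y. integral UNIV (\<lambda>x. h x y)) at_top"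
  proof (rule uniform_limitI)
    fix e :: real
    assume "e > 0"
    have "((\<lambda>s. 2 * K / s) \<longlongrightarrow> 0) at_top"
      by (intro tendsto_divide_0[OF tendsto_const] filterlim_at_top_imp_at_infinity filterlim_ident)
    then have "\<forall>\<^sub>F s in at_top. 2 * K / s < e \<and> 1 \<le> s"
      using \<open>e > 0\<close> by (intro eventually_conj order_tendstoD(2) eventually_ge_at_top)
    then show "\<forall>\<^sub>F s in at_top. \<forall>y\<in>UNIV. dist (integral {-s..s} (\<lambda>x. h x y)) (integral UNIV (\<lambda>x. h x y)) < e"
    proof eventually_elim
      case (elim s)
      have "norm (integral UNIV (\<lambda>x. h x y) - integral {-s..s} (\<lambda>x. h x y)) \<le> 2 * K / s" for y
        using elim by (intro norm_integral_tail_le int bound) auto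
      then show ?case
        using elim by (auto simp: dist_norm norm_minus_commute intro: le_less_trans)
    qed
  qed
qed simp

lemma mod_dec1_if_le:
  fixes g :: "real \<Rightarrow> 'a::real_normed_vector"
  assumes bound: "\<And>t. norm (g t) \<le> K / (1 + t\<^sup>2)"
  shows "mod_dec1 g"
  unfolding mod_dec1_def
proof (intro exI allI impI)
  fix t :: real
  assume "1 < \<bar>t\<bar>"
  have "0 \<le> K"
    using order_trans[OF norm_ge_zero bound[of 0]] by simp
  moreover have "0 < t\<^sup>2"
    using \<open>1 < \<bar>t\<bar>\<close> by simp
  ultimately have "K / (1 + t\<^sup>2) \<le> K / t\<^sup>2"
    by (intro divide_left_mono) (auto intro!: mult_pos_pos add_pos_nonneg)
  then show "norm (g t) \<le> K / t\<^sup>2"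
    using bound order_trans by blast
qed

lemma mod_dec2_3_if_le:
  fixes h :: "real \<Rightarrow> real \<Rightarrow> 'a::real_normed_vector"
  assumes "\<And>u v. norm (h u v) \<le> K / sqrt (1 + u\<^sup>2 + v\<^sup>2) ^ 3"
  shows "mod_dec2 {} 3 h"
  unfolding mod_dec2_def
proof (intro exI allI impI)
  fix u v :: real
  assume "(u, v) \<notin> {} \<and> 1 < norm (u, v)"
  moreover have "0 \<le> K"
    using order_trans[OF norm_ge_zero assms[of 0 0]] by simp
  moreover have "norm (u, v) \<le> sqrt (1 + u\<^sup>2 + v\<^sup>2)"
    by (simp add: norm_Pair)
  ultimately have "K / sqrt (1 + u\<^sup>2 + v\<^sup>2) ^ 3 \<le> K / norm (u, v) ^ 3"
    by (intro divide_power_le_divide_power) auto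
  then show "norm (h u v) \<le> K / norm (u, v) ^ 3"
    using assms order_trans by blast
qed

lemma sqrt_one_add_square_le:
  fixes N :: real
  assumes "0 \<le> N"
  shows "sqrt (1 + N\<^sup>2) \<le> 2 * max 1 N"
proof (rule real_le_lsqrt)
  define m where "m = max 1 N"
  have "1 \<le> m" "N\<^sup>2 \<le> m\<^sup>2" "1 \<le> m\<^sup>2" "(2 * m)\<^sup>2 = 4 * m\<^sup>2"
    using assms unfolding m_def by (auto intro: power_mono simp: one_le_power power_mult_distrib)
  then show "0 \<le> 2 * max 1 N" "1 + N\<^sup>2 \<le> (2 * max 1 N)\<^sup>2"
    unfolding m_def[symmetric] by linarith+
qed

lemma mod_dec3_weighted_bound:
  fixes D :: "real \<Rightarrow> real \<Rightarrow> real \<Rightarrow> real"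
  assumes cont: "continuous_on UNIV (\<lambda>(x, y, z). D x y z)" and "mod_dec3 n D"
  shows "\<exists>C. \<forall>x y z. \<bar>D x y z\<bar> \<le> C / sqrt (1 + x\<^sup>2 + y\<^sup>2 + z\<^sup>2) ^ n"
proof -
  obtain C0 where C0: "\<And>x y z. 1 < norm (x, y, z) \<Longrightarrow> \<bar>D x y z\<bar> \<le> C0 / norm (x, y, z) ^ n"
    using \<open>mod_dec3 n D\<close> unfolding mod_dec3_def by blast
  obtain M where M: "\<And>p. p \<in> cball 0 1 \<Longrightarrow> norm ((\<lambda>(x, y, z). D x y z) p) \<le> M"
    using compact_imp_bounded[OF compact_continuous_image[OF continuous_on_subset[OF cont] compact_cball]]
    unfolding bounded_iff by blast
  have "\<bar>D x y z\<bar> * sqrt (1 + x\<^sup>2 + y\<^sup>2 + z\<^sup>2) ^ n \<le> (\<bar>C0\<bar> + \<bar>M\<bar>) * 2 ^ n" for x y z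
  proof -
    define N where "N = norm (x, y, z)"
    have eq: "sqrt (1 + x\<^sup>2 + y\<^sup>2 + z\<^sup>2) = sqrt (1 + N\<^sup>2)" and "0 \<le> N"
      unfolding N_def by (simp_all add: norm_Pair ac_simps)
    then have q: "0 < sqrt (1 + x\<^sup>2 + y\<^sup>2 + z\<^sup>2)" "sqrt (1 + x\<^sup>2 + y\<^sup>2 + z\<^sup>2) \<le> 2 * max 1 N"
      unfolding eq by (simp_all add: sqrt_one_add_square_le add_pos_nonneg)
    show ?thesis
    proof (cases "N > 1")
      case True
      then have "\<bar>D x y z\<bar> * sqrt (1 + x\<^sup>2 + y\<^sup>2 + z\<^sup>2) ^ n \<le> \<bar>C0\<bar> / N ^ n * (2 * N) ^ n"
        using C0[of x y z] q unfolding N_def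
        by (intro mult_mono power_mono) (auto intro: order_trans[OF _ divide_right_mono[OF abs_ge_self]])
      also have "\<dots> = \<bar>C0\<bar> * 2 ^ n"
        using True by (simp add: power_mult_distrib)
      finally show ?thesis
        by (simp add: distrib_right add_increasing2)
    next
      case False
      then have "\<bar>D x y z\<bar> * sqrt (1 + x\<^sup>2 + y\<^sup>2 + z\<^sup>2) ^ n \<le> \<bar>M\<bar> * 2 ^ n"
        using M[of "(x, y, z)"] q unfolding N_def by (intro mult_mono power_mono) auto
      then show ?thesis
        by (simp add: distrib_right add_increasing)
    qed
  qed
  then show ?thesis
    by (metis pos_le_divide_eq real_sqrt_gt_zero add_pos_nonneg zero_less_one zero_le_power2
        zero_less_power mult.commute)
qed

section \<open>Integration by parts against the oscillatory factor\<close>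

lemma norm_ef [simp]: "norm (ef k t) = 1"
  unfolding ef_def by (simp add: norm_exp_eq_Re)

lemma has_vector_derivative_ef:
  "(ef k has_vector_derivative (- (\<i> * of_real k) * ef k t)) (at t within S)"
proof -
  have "((\<lambda>z. exp (- (\<i> * (of_real k * z)))) has_field_derivative
      exp (- (\<i> * (of_real k * of_real t))) * (- (\<i> * of_real k))) (at (of_real t))"
    by (auto intro!: derivative_eq_intros)
  from has_vector_derivative_real_field[OF this] show ?thesis
    unfolding ef_def by (auto intro: has_vector_derivative_at_within simp: mult.commute)
qed

lemma continuous_on_ef [continuous_intros]: "continuous_on S (ef k)"
  unfolding ef_def by (intro continuous_intros)

definition boundary_term :: "(real \<Rightarrow> real) \<Rightarrow> real \<Rightarrow> real \<Rightarrow> complex" where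
  "boundary_term g k s = of_real (g s) * ef k s - of_real (g (-s)) * ef k (-s)"

lemma norm_boundary_term_le: "norm (boundary_term g k s) \<le> \<bar>g s\<bar> + \<bar>g (-s)\<bar>"
  unfolding boundary_term_def
  by (rule order_trans[OF norm_triangle_ineq4]) (simp add: norm_mult)

lemma continuous_on_boundary_term:
  assumes "continuous_on UNIV (\<lambda>(x, y). h x y)"
  shows "continuous_on S (\<lambda>y. boundary_term (\<lambda>x. h x y) k s)"
  unfolding boundary_term_def
  by (intro continuous_intros continuous_on_fix_fst[OF assms])

lemma tendsto_boundary_term_0:
  assumes "(g \<longlongrightarrow> 0) at_infinity"
  shows "((\<lambda>s. boundary_term g k s) \<longlongrightarrow> 0) at_top"
proof (rule Lim_null_comparison)
  have "((\<lambda>s. g s) \<longlongrightarrow> 0) at_top"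
    using assms at_top_le_at_infinity by (rule tendsto_mono[rotated])
  moreover have "((\<lambda>s. g (-s)) \<longlongrightarrow> 0) at_top"
    using tendsto_mono[OF at_bot_le_at_infinity assms] filterlim_uminus_at_bot_at_top
    by (rule filterlim_compose)
  ultimately show "((\<lambda>s. \<bar>g s\<bar> + \<bar>g (-s)\<bar>) \<longlongrightarrow> 0) at_top"
    using tendsto_add[OF tendsto_rabs tendsto_rabs] by force
qed (simp add: norm_boundary_term_le)

lemma integral_ef_by_parts:
  fixes g g' :: "real \<Rightarrow> real"
  assumes deriv: "\<And>x. (g has_real_derivative g' x) (at x)" and cont: "continuous_on UNIV g'"
    and "k \<noteq> 0" "a \<le> b"
  shows "integral {a..b} (\<lambda>x. of_real (g x) * ef k x) =
    (integral {a..b} (\<lambda>x. of_real (g' x) * ef k x) - (of_real (g b) * ef k b - of_real (g a) * ef k a))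
      / (\<i> * of_real k)"
proof -
  define G where "G x = of_real (g x) * ef k x" for x
  define G' where "G' x = of_real (g' x) * ef k x" for x
  have "continuous_on UNIV g"
    using deriv by (intro continuous_at_imp_continuous_on ballI DERIV_isCont) auto
  then have int: "G integrable_on {a..b}" "G' integrable_on {a..b}"
    unfolding G_def G'_def using cont
    by (auto intro!: integrable_continuous_interval continuous_intros intro: continuous_on_subset)
  have "((\<lambda>x. of_real (g x) * (- (\<i> * of_real k) * ef k x) + of_real (g' x) * ef k x) has_integral
      G b - G a) {a..b}"
    unfolding G_def by (rule fundamental_theorem_of_calculus[OF \<open>a \<le> b\<close>])
      (auto intro!: derivative_eq_intros deriv[THEN DERIV_subset] has_vector_derivative_ef)
  then have "((\<lambda>x. - (\<i> * of_real k) * G x + G' x) has_integral G b - G a) {a..b}"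
    unfolding G_def G'_def by (simp add: algebra_simps)
  moreover have "((\<lambda>x. - (\<i> * of_real k) * G x + G' x) has_integral
      - (\<i> * of_real k) * integral {a..b} G + integral {a..b} G') {a..b}"
    using int by (intro has_integral_add has_integral_mult_right integrable_integral)
  ultimately have "- (\<i> * of_real k) * integral {a..b} G + integral {a..b} G' = G b - G a"
    by (rule has_integral_unique[rotated])
  then have "integral {a..b} G = (integral {a..b} G' - (G b - G a)) / (\<i> * of_real k)"
    using \<open>k \<noteq> 0\<close> by (subst eq_divide_eq) (auto simp: algebra_simps)
  then show ?thesis
    unfolding G_def G'_def .
qed

lemma integral_ef_by_parts_iterated:
  fixes g :: "nat \<Rightarrow> real \<Rightarrow> real"
  assumes "\<And>i x. i < n \<Longrightarrow> (g i has_real_derivative g (Suc i) x) (at x)"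
    and "continuous_on UNIV (g n)" and "k \<noteq> 0" "0 \<le> s"
  shows "integral {-s..s} (\<lambda>x. of_real (g 0 x) * ef k x) =
    integral {-s..s} (\<lambda>x. of_real (g n x) * ef k x) / (\<i> * of_real k) ^ n
    - (\<Sum>i<n. boundary_term (g i) k s / (\<i> * of_real k) ^ Suc i)"
  using assms(1,2)
proof (induction n)
  case (Suc n)
  have deriv: "(g n has_real_derivative g (Suc n) x) (at x)" for x
    by (rule Suc.prems(1)) simp
  then have "continuous_on UNIV (g n)"
    by (intro continuous_at_imp_continuous_on ballI DERIV_isCont) auto
  with Suc have IH: "integral {-s..s} (\<lambda>x. of_real (g 0 x) * ef k x) =
    integral {-s..s} (\<lambda>x. of_real (g n x) * ef k x) / (\<i> * of_real k) ^ n
    - (\<Sum>i<n. boundary_term (g i) k s / (\<i> * of_real k) ^ Suc i)"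
    by simp
  have "integral {-s..s} (\<lambda>x. of_real (g n x) * ef k x) =
      (integral {-s..s} (\<lambda>x. of_real (g (Suc n) x) * ef k x) - boundary_term (g n) k s) / (\<i> * of_real k)"
    unfolding boundary_term_def
    using integral_ef_by_parts[OF deriv Suc.prems(2) \<open>k \<noteq> 0\<close>] \<open>0 \<le> s\<close> by simp
  then show ?case
    unfolding IH by (simp add: diff_divide_distrib)
qed simp

lemma tendsto_integral_ef_by_parts_iterated:
  fixes g :: "nat \<Rightarrow> real \<Rightarrow> real"
  assumes "\<And>i x. i < n \<Longrightarrow> (g i has_real_derivative g (Suc i) x) (at x)"
    and "continuous_on UNIV (g n)" and "\<And>i. i < n \<Longrightarrow> (g i \<longlongrightarrow> 0) at_infinity"
    and "((\<lambda>s. integral {-s..s} (\<lambda>x. of_real (g n x) * ef k x)) \<longlongrightarrow> L) at_top"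
    and "k \<noteq> 0"
  shows "((\<lambda>s. integral {-s..s} (\<lambda>x. of_real (g 0 x) * ef k x)) \<longlongrightarrow> L / (\<i> * of_real k) ^ n) at_top"
proof -
  have "((\<lambda>s. integral {-s..s} (\<lambda>x. of_real (g n x) * ef k x) / (\<i> * of_real k) ^ n
      - (\<Sum>i<n. boundary_term (g i) k s / (\<i> * of_real k) ^ Suc i))
      \<longlongrightarrow> L / (\<i> * of_real k) ^ n - (\<Sum>i<n. 0 / (\<i> * of_real k) ^ Suc i)) at_top"
    using assms(3-5) by (intro tendsto_intros tendsto_boundary_term_0) auto
  then have "((\<lambda>s. integral {-s..s} (\<lambda>x. of_real (g n x) * ef k x) / (\<i> * of_real k) ^ n
      - (\<Sum>i<n. boundary_term (g i) k s / (\<i> * of_real k) ^ Suc i)) \<longlongrightarrow> L / (\<i> * of_real k) ^ n) at_top"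
    by simp
  then show ?thesis
    by (rule Lim_transform_eventually[OF _ eventually_mono[OF eventually_ge_at_top[of 0]]])
      (simp_all add: integral_ef_by_parts_iterated[OF assms(1,2,5)])
qed

lemma tendsto_integral_ef_decaying_derivatives:
  fixes g :: "nat \<Rightarrow> real \<Rightarrow> real"
  assumes deriv: "\<And>i x. i < 3 \<Longrightarrow> (g i has_real_derivative g (Suc i) x) (at x)"
    and cont: "continuous_on UNIV (g 3)"
    and bound: "\<And>i x. i \<le> 3 \<Longrightarrow> \<bar>g i x\<bar> \<le> C / sqrt (a\<^sup>2 + x\<^sup>2) ^ Suc i"
    and "a > 0" "k \<noteq> 0"
  shows "(\<lambda>x. of_real (g 3 x) * ef k x) integrable_on UNIV"
    and "((\<lambda>s. integral {-s..s} (\<lambda>x. of_real (g 0 x) * ef k x)) \<longlongrightarrow>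
      integral UNIV (\<lambda>x. of_real (g 3 x) * ef k x) / (\<i> * of_real k) ^ 3) at_top"
    and "norm (integral UNIV (\<lambda>x. of_real (g 3 x) * ef k x)) \<le> C * pi / a ^ 3"
proof -
  have "0 \<le> C"
    using order_trans[OF abs_ge_zero bound[of 0 0]] \<open>a > 0\<close> by (simp add: zero_le_divide_iff)
  have dom: "norm (of_real (g 3 x) * ef k x) \<le> (C / a\<^sup>2) / (a\<^sup>2 + x\<^sup>2)" for x
    using bound[of 3 x] divide_sqrt_power_le[OF \<open>0 \<le> C\<close> \<open>a > 0\<close>, of 4 x]
    by (simp add: norm_mult numeral_eq_Suc)
  show int: "(\<lambda>x. of_real (g 3 x) * ef k x) integrable_on UNIV"
    by (intro integrable_on_UNIV_dominated[OF _ \<open>a > 0\<close> dom] continuous_intros cont)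
  show "norm (integral UNIV (\<lambda>x. of_real (g 3 x) * ef k x)) \<le> C * pi / a ^ 3"
    using norm_integral_UNIV_le[OF int \<open>a > 0\<close> dom] \<open>a > 0\<close>
    by (simp add: power2_eq_square power3_eq_cube mult.commute mult.left_commute)
  have "(g i \<longlongrightarrow> 0) at_infinity" if "i < 3" for i
  proof (rule tendsto_0_at_infinity_if_le_inverse)
    fix x :: real
    assume "1 \<le> \<bar>x\<bar>"
    moreover have "\<bar>x\<bar> \<le> sqrt (a\<^sup>2 + x\<^sup>2)"
      by (rule real_le_rsqrt) simp
    ultimately show "\<bar>g i x\<bar> \<le> C / \<bar>x\<bar>"
      using that bound[of i x] divide_power_le_divide_power[OF \<open>0 \<le> C\<close>, of "\<bar>x\<bar>" _ 1 "Suc i"]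
      by fastforce
  qed
  then show "((\<lambda>s. integral {-s..s} (\<lambda>x. of_real (g 0 x) * ef k x)) \<longlongrightarrow>
      integral UNIV (\<lambda>x. of_real (g 3 x) * ef k x) / (\<i> * of_real k) ^ 3) at_top"
    using deriv cont \<open>k \<noteq> 0\<close>
    by (intro tendsto_integral_ef_by_parts_iterated tendsto_integral_symmetric_interval int)
qed

section \<open>One-dimensional principal value transforms\<close>

definition pv_fourier :: "(real \<Rightarrow> real) \<Rightarrow> real \<Rightarrow> complex" where
  "pv_fourier g k = Lim at_top (\<lambda>r. integral {-r..r} (\<lambda>x. of_real (g x) * ef k x))"

definition x_derivatives_decay :: "real \<Rightarrow> (nat \<Rightarrow> real \<Rightarrow> real \<Rightarrow> real \<Rightarrow> real) \<Rightarrow> bool" where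
  "x_derivatives_decay C D \<longleftrightarrow>
     (\<forall>i<3. \<forall>x y z. ((\<lambda>t. D i t y z) has_real_derivative D (Suc i) x y z) (at x)) \<and>
     (\<forall>i\<le>3. continuous_on UNIV (\<lambda>(x, y, z). D i x y z)) \<and>
     (\<forall>i\<le>3. \<forall>x y z. \<bar>D i x y z\<bar> \<le> C / sqrt (1 + x\<^sup>2 + y\<^sup>2 + z\<^sup>2) ^ Suc i)"

lemma x_derivatives_decayD:
  assumes "x_derivatives_decay C D"
  shows "i < 3 \<Longrightarrow> ((\<lambda>t. D i t y z) has_real_derivative D (Suc i) x y z) (at x)"
    and "i \<le> 3 \<Longrightarrow> continuous_on UNIV (\<lambda>(x, y, z). D i x y z)"
    and "i \<le> 3 \<Longrightarrow> \<bar>D i x y z\<bar> \<le> C / sqrt (1 + x\<^sup>2 + y\<^sup>2 + z\<^sup>2) ^ Suc i"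
    and "0 \<le> C"
proof -
  show "i < 3 \<Longrightarrow> ((\<lambda>t. D i t y z) has_real_derivative D (Suc i) x y z) (at x)"
    "i \<le> 3 \<Longrightarrow> continuous_on UNIV (\<lambda>(x, y, z). D i x y z)"
    and bound: "i \<le> 3 \<Longrightarrow> \<bar>D i x y z\<bar> \<le> C / sqrt (1 + x\<^sup>2 + y\<^sup>2 + z\<^sup>2) ^ Suc i" for i x y z
    using assms unfolding x_derivatives_decay_def by auto
  show "0 \<le> C"
    using order_trans[OF abs_ge_zero bound[of 0 0 0 0]] by simp
qed

lemma x_derivatives_decay_swap:
  assumes D: "x_derivatives_decay C D"
  shows "x_derivatives_decay C (\<lambda>i x y z. D i x z y)"
  unfolding x_derivatives_decay_def
proof (intro conjI allI impI)
  fix i :: nat and x y z :: real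
  assume "i \<le> 3"
  show "continuous_on UNIV (\<lambda>(x, y, z). D i x z y)"
    using continuous_on_permute3(1)[OF x_derivatives_decayD(2)[OF D \<open>i \<le> 3\<close>]] .
  have "1 + x\<^sup>2 + z\<^sup>2 + y\<^sup>2 = 1 + x\<^sup>2 + y\<^sup>2 + z\<^sup>2"
    by simp
  then show "\<bar>D i x z y\<bar> \<le> C / sqrt (1 + x\<^sup>2 + y\<^sup>2 + z\<^sup>2) ^ Suc i"
    using x_derivatives_decayD(3)[OF D \<open>i \<le> 3\<close>, of x z y] by metis
qed (use x_derivatives_decayD(1)[OF D] in simp)

lemma continuous_on_x_derivatives_slice:
  assumes D: "x_derivatives_decay C D" and "i \<le> 3"
  shows "continuous_on UNIV (\<lambda>x. D i x y z)" and "continuous_on UNIV (\<lambda>(x, y). D i x y z)"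
proof -
  have "continuous_on UNIV (\<lambda>x. (\<lambda>(x, y, z). D i x y z) (x, y, z))"
    by (rule continuous_on_compose2[OF x_derivatives_decayD(2)[OF assms]]) (auto intro!: continuous_intros)
  then show "continuous_on UNIV (\<lambda>x. D i x y z)"
    by simp
  have "continuous_on UNIV (\<lambda>p. (\<lambda>(x, y, z). D i x y z) (fst p, snd p, z))"
    by (rule continuous_on_compose2[OF x_derivatives_decayD(2)[OF assms]]) (auto intro!: continuous_intros)
  then show "continuous_on UNIV (\<lambda>(x, y). D i x y z)"
    by (simp add: case_prod_unfold)
qed

lemma continuous_on_x_derivatives_ef:
  assumes "x_derivatives_decay C D" "i \<le> 3"
  shows "continuous_on UNIV (\<lambda>(x, y). of_real (D i x y z) * ef k x)"
  using continuous_on_x_derivatives_slice(2)[OF assms, of z]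
  by (auto simp: case_prod_unfold intro!: continuous_intros continuous_on_compose2[OF continuous_on_ef[of UNIV k]])

lemma x_derivatives_decay_le_inverse_abs:
  assumes "x_derivatives_decay C D" "i \<le> 3" "x \<noteq> 0"
  shows "\<bar>D i x y z\<bar> \<le> C / \<bar>x\<bar>"
proof -
  have "\<bar>x\<bar> \<le> sqrt (1 + x\<^sup>2 + y\<^sup>2 + z\<^sup>2)"
    by (rule real_le_rsqrt) simp
  then have "C / sqrt (1 + x\<^sup>2 + y\<^sup>2 + z\<^sup>2) ^ Suc i \<le> C / \<bar>x\<bar> ^ 1"
    using assms x_derivatives_decayD(4)[OF assms(1)] by (intro divide_power_le_divide_power) auto
  then show ?thesis
    using order_trans[OF x_derivatives_decayD(3)[OF assms(1,2)]] by simp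
qed

lemma x_derivatives_decay_le_inverse_sum_squares:
  assumes "x_derivatives_decay C D" "1 \<le> i" "i \<le> 3" "0 < x\<^sup>2 + y\<^sup>2"
  shows "\<bar>D i x y z\<bar> \<le> C / (x\<^sup>2 + y\<^sup>2)"
proof -
  have "sqrt (x\<^sup>2 + y\<^sup>2) \<le> sqrt (1 + x\<^sup>2 + y\<^sup>2 + z\<^sup>2)"
    by simp
  then have "C / sqrt (1 + x\<^sup>2 + y\<^sup>2 + z\<^sup>2) ^ Suc i \<le> C / sqrt (x\<^sup>2 + y\<^sup>2) ^ 2"
    using assms x_derivatives_decayD(4)[OF assms(1)] by (intro divide_power_le_divide_power) auto
  then show ?thesis
    using order_trans[OF x_derivatives_decayD(3)[OF assms(1,3)]] \<open>0 < x\<^sup>2 + y\<^sup>2\<close> by simp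
qed

lemma x_derivatives_decay_3_le:
  assumes "x_derivatives_decay C D" "0 < w" "w \<le> x\<^sup>2"
  shows "\<bar>D 3 x y z\<bar> \<le> C / ((w + y\<^sup>2) * x\<^sup>2)"
proof -
  define \<rho> where "\<rho> = 1 + x\<^sup>2 + y\<^sup>2 + z\<^sup>2"
  have "w + y\<^sup>2 \<le> \<rho>" "x\<^sup>2 \<le> \<rho>"
    using assms(3) zero_le_power2[of y] zero_le_power2[of z] unfolding \<rho>_def by linarith+
  then have "(w + y\<^sup>2) * x\<^sup>2 \<le> \<rho> * \<rho>"
    using \<open>0 < w\<close> by (intro mult_mono) (auto intro: order_trans[OF zero_le_power2])
  also have "\<dots> = sqrt \<rho> ^ Suc 3"
    unfolding \<rho>_def by (simp add: numeral_eq_Suc add_nonneg_nonneg)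
  finally have le: "(w + y\<^sup>2) * x\<^sup>2 \<le> sqrt \<rho> ^ Suc 3" .
  have "0 < (w + y\<^sup>2) * x\<^sup>2"
    using assms(2,3) by (intro mult_pos_pos add_pos_nonneg) auto
  then have "C / sqrt \<rho> ^ Suc 3 \<le> C / ((w + y\<^sup>2) * x\<^sup>2)"
    using le x_derivatives_decayD(4)[OF assms(1)]
    by (intro divide_left_mono) (auto intro: mult_pos_pos less_le_trans)
  then show ?thesis
    using x_derivatives_decayD(3)[OF assms(1), of 3 x y z] unfolding \<rho>_def by simp
qed

lemma pv_fourier_x_derivatives:
  assumes D: "x_derivatives_decay C D" and "k \<noteq> 0"
  shows "(\<lambda>x. of_real (D 3 x y z) * ef k x) integrable_on UNIV"
    and "((\<lambda>r. integral {-r..r} (\<lambda>x. of_real (D 0 x y z) * ef k x)) \<longlongrightarrow> pv_fourier (\<lambda>x. D 0 x y z) k) at_top"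
    and "pv_fourier (\<lambda>x. D 0 x y z) k = integral UNIV (\<lambda>x. of_real (D 3 x y z) * ef k x) / (\<i> * of_real k) ^ 3"
    and "norm (pv_fourier (\<lambda>x. D 0 x y z) k) \<le> C * pi / \<bar>k\<bar> ^ 3 / sqrt (1 + y\<^sup>2 + z\<^sup>2) ^ 3"
proof -
  define a where "a = sqrt (1 + y\<^sup>2 + z\<^sup>2)"
  have "a > 0"
    unfolding a_def by (simp add: add_pos_nonneg)
  have "\<bar>D i x y z\<bar> \<le> C / sqrt (a\<^sup>2 + x\<^sup>2) ^ Suc i" if "i \<le> 3" for i x
    using x_derivatives_decayD(3)[OF D that, of x y z] unfolding a_def by (simp add: ac_simps)
  note tower = tendsto_integral_ef_decaying_derivatives[where g = "\<lambda>i x. D i x y z",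
      OF x_derivatives_decayD(1)[OF D] continuous_on_x_derivatives_slice(1)[OF D order_refl] this \<open>a > 0\<close> \<open>k \<noteq> 0\<close>]
  show "(\<lambda>x. of_real (D 3 x y z) * ef k x) integrable_on UNIV"
    by (rule tower(1))
  show eq: "pv_fourier (\<lambda>x. D 0 x y z) k = integral UNIV (\<lambda>x. of_real (D 3 x y z) * ef k x) / (\<i> * of_real k) ^ 3"
    unfolding pv_fourier_def by (rule tendsto_Lim[OF _ tower(2)]) simp_all
  show "((\<lambda>r. integral {-r..r} (\<lambda>x. of_real (D 0 x y z) * ef k x)) \<longlongrightarrow> pv_fourier (\<lambda>x. D 0 x y z) k) at_top"
    unfolding eq by (rule tower(2))
  have "norm (pv_fourier (\<lambda>x. D 0 x y z) k) = norm (integral UNIV (\<lambda>x. of_real (D 3 x y z) * ef k x)) / \<bar>k\<bar> ^ 3"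
    unfolding eq by (simp add: norm_divide norm_mult norm_power)
  also have "\<dots> \<le> C * pi / a ^ 3 / \<bar>k\<bar> ^ 3"
    by (intro divide_right_mono tower(3)) simp_all
  finally show "norm (pv_fourier (\<lambda>x. D 0 x y z) k) \<le> C * pi / \<bar>k\<bar> ^ 3 / sqrt (1 + y\<^sup>2 + z\<^sup>2) ^ 3"
    unfolding a_def by (simp add: field_simps)
qed

lemma mod_dec2_pv_fourier_x_derivatives:
  assumes "x_derivatives_decay C D" "k \<noteq> 0"
  shows "mod_dec2 {} 3 (\<lambda>y z. pv_fourier (\<lambda>x. D 0 x y z) k)"
  using pv_fourier_x_derivatives(4)[OF assms]
  by (intro mod_dec2_3_if_le[where K = "C * pi / \<bar>k\<bar> ^ 3"]) (simp add: divide_divide_eq_left)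

lemma continuous_on_pv_fourier_x_derivatives:
  assumes X: "x_derivatives_decay C X" and "k \<noteq> 0"
  shows "continuous_on UNIV (\<lambda>y. pv_fourier (\<lambda>x. X 0 x y z) k)"
proof -
  have "continuous_on UNIV (\<lambda>y. integral UNIV (\<lambda>x. of_real (X 3 x y z) * ef k x))"
  proof (rule continuous_on_integral_UNIV_param)
    show "continuous_on UNIV (\<lambda>(x, y). of_real (X 3 x y z) * ef k x)"
      by (rule continuous_on_x_derivatives_ef[OF X]) simp
    show "(\<lambda>x. of_real (X 3 x y z) * ef k x) integrable_on UNIV" for y
      by (rule pv_fourier_x_derivatives(1)[OF X \<open>k \<noteq> 0\<close>])
    show "norm (of_real (X 3 x y z) * ef k x) \<le> C / x\<^sup>2" if "1 \<le> \<bar>x\<bar>" for x y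
    proof -
      have "\<bar>x\<bar> \<le> sqrt (1 + x\<^sup>2 + y\<^sup>2 + z\<^sup>2)"
        by (rule real_le_rsqrt) simp
      then have "C / sqrt (1 + x\<^sup>2 + y\<^sup>2 + z\<^sup>2) ^ Suc 3 \<le> C / \<bar>x\<bar> ^ 2"
        using that x_derivatives_decayD(4)[OF X] by (intro divide_power_le_divide_power) auto
      then show ?thesis
        using order_trans[OF x_derivatives_decayD(3)[OF X, of 3 x y z]] by (simp add: norm_mult)
    qed
  qed
  then show ?thesis
    unfolding pv_fourier_x_derivatives(3)[OF X \<open>k \<noteq> 0\<close>] using \<open>k \<noteq> 0\<close> by (intro continuous_intros) auto
qed

lemma integral_pv_fourier_x_derivatives_ef:
  assumes X: "x_derivatives_decay C X" and "k1 \<noteq> 0"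
  shows "(\<lambda>y. pv_fourier (\<lambda>x. X 0 x y z) k1 * ef k2 y) integrable_on UNIV"
    and "norm (integral UNIV (\<lambda>y. pv_fourier (\<lambda>x. X 0 x y z) k1 * ef k2 y))
      \<le> C * pi\<^sup>2 / \<bar>k1\<bar> ^ 3 / (1 + z\<^sup>2)"
proof -
  define a where "a = sqrt (1 + z\<^sup>2)"
  have "a > 0" "a\<^sup>2 = 1 + z\<^sup>2"
    unfolding a_def by (simp_all add: add_pos_nonneg)
  have K: "0 \<le> C * pi / \<bar>k1\<bar> ^ 3"
    using x_derivatives_decayD(4)[OF X] by simp
  have dom: "norm (pv_fourier (\<lambda>x. X 0 x y z) k1 * ef k2 y) \<le> C * pi / \<bar>k1\<bar> ^ 3 / a / (a\<^sup>2 + y\<^sup>2)" for y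
  proof -
    have "norm (pv_fourier (\<lambda>x. X 0 x y z) k1 * ef k2 y) \<le> C * pi / \<bar>k1\<bar> ^ 3 / sqrt (a\<^sup>2 + y\<^sup>2) ^ 3"
      using pv_fourier_x_derivatives(4)[OF X \<open>k1 \<noteq> 0\<close>, of y z] \<open>a\<^sup>2 = 1 + z\<^sup>2\<close>
      by (simp add: norm_mult ac_simps)
    also have "\<dots> \<le> C * pi / \<bar>k1\<bar> ^ 3 / a ^ (3 - 2) / (a\<^sup>2 + y\<^sup>2)"
      by (rule divide_sqrt_power_le[OF K \<open>a > 0\<close>]) simp
    finally show ?thesis
      by simp
  qed
  show int: "(\<lambda>y. pv_fourier (\<lambda>x. X 0 x y z) k1 * ef k2 y) integrable_on UNIV"
    by (intro integrable_on_UNIV_dominated[OF _ \<open>a > 0\<close> dom] continuous_intros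
        continuous_on_pv_fourier_x_derivatives[OF X \<open>k1 \<noteq> 0\<close>])
  show "norm (integral UNIV (\<lambda>y. pv_fourier (\<lambda>x. X 0 x y z) k1 * ef k2 y))
      \<le> C * pi\<^sup>2 / \<bar>k1\<bar> ^ 3 / (1 + z\<^sup>2)"
    using norm_integral_UNIV_le[OF int \<open>a > 0\<close> dom] unfolding \<open>a\<^sup>2 = 1 + z\<^sup>2\<close>[symmetric]
    by (simp add: power2_eq_square ac_simps)
qed

section \<open>Iterated principal value transforms\<close>

definition pv_fourier2 :: "(real \<Rightarrow> real \<Rightarrow> real) \<Rightarrow> real \<Rightarrow> real \<Rightarrow> complex" where
  "pv_fourier2 h k1 k2 = Lim (at_top \<times>\<^sub>F at_top)
     (\<lambda>(r, s). integral {-r..r} (\<lambda>y. integral {-s..s} (\<lambda>x. of_real (h x y) * ef k1 x * ef k2 y)))"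

lemma pv_fourier_truncation_error_eq:
  assumes X: "x_derivatives_decay C X" and "k \<noteq> 0" "0 \<le> s"
  shows "integral {-s..s} (\<lambda>x. of_real (X 0 x y z) * ef k x) - pv_fourier (\<lambda>x. X 0 x y z) k
      + boundary_term (\<lambda>x. X 0 x y z) k s / (\<i> * of_real k)
    = (integral {-s..s} (\<lambda>x. of_real (X 3 x y z) * ef k x) - integral UNIV (\<lambda>x. of_real (X 3 x y z) * ef k x))
        / (\<i> * of_real k) ^ 3
      - boundary_term (\<lambda>x. X 1 x y z) k s / (\<i> * of_real k) ^ 2
      - boundary_term (\<lambda>x. X 2 x y z) k s / (\<i> * of_real k) ^ 3"
proof -
  have "(\<Sum>i<3. f i) = f 0 + f 1 + f 2" for f :: "nat \<Rightarrow> complex"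
    by (simp add: numeral_3_eq_3 numeral_2_eq_2)
  then have "integral {-s..s} (\<lambda>x. of_real (X 0 x y z) * ef k x)
      = integral {-s..s} (\<lambda>x. of_real (X 3 x y z) * ef k x) / (\<i> * of_real k) ^ 3
        - (boundary_term (\<lambda>x. X 0 x y z) k s / (\<i> * of_real k)
          + boundary_term (\<lambda>x. X 1 x y z) k s / (\<i> * of_real k) ^ 2
          + boundary_term (\<lambda>x. X 2 x y z) k s / (\<i> * of_real k) ^ 3)"
    using integral_ef_by_parts_iterated[where g = "\<lambda>i x. X i x y z", OF x_derivatives_decayD(1)[OF X]
        continuous_on_x_derivatives_slice(1)[OF X order_refl] \<open>k \<noteq> 0\<close> \<open>0 \<le> s\<close>]
    by (simp add: power2_eq_square power3_eq_cube)
  then show ?thesis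
    unfolding pv_fourier_x_derivatives(3)[OF X \<open>k \<noteq> 0\<close>] by (simp add: diff_divide_distrib)
qed

lemma norm_pv_fourier_truncation_error_le:
  assumes X: "x_derivatives_decay C X" and "k \<noteq> 0" "1 \<le> s"
  shows "norm (integral {-s..s} (\<lambda>x. of_real (X 0 x y z) * ef k x) - pv_fourier (\<lambda>x. X 0 x y z) k
      + boundary_term (\<lambda>x. X 0 x y z) k s / (\<i> * of_real k))
    \<le> (4 / \<bar>k\<bar> ^ 3 + 2 / \<bar>k\<bar> ^ 2) * C / (s\<^sup>2 + y\<^sup>2)"
proof -
  define B where "B = C / (s\<^sup>2 + y\<^sup>2)"
  define I where "I S = integral S (\<lambda>x. of_real (X 3 x y z) * ef k x)" for S
  have "0 < s\<^sup>2 + y\<^sup>2" "0 \<le> B"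
    using \<open>1 \<le> s\<close> x_derivatives_decayD(4)[OF X] unfolding B_def by (simp_all add: add_pos_nonneg)
  have "s\<^sup>2 \<le> x\<^sup>2" if "s \<le> \<bar>x\<bar>" for x
    using power_mono[OF that, of 2] \<open>1 \<le> s\<close> by simp
  then have "norm (I UNIV - I {-s..s}) \<le> 2 * B / s"
    unfolding I_def B_def using \<open>1 \<le> s\<close> x_derivatives_decay_3_le[OF X, of "s\<^sup>2"]
    by (intro norm_integral_tail_le pv_fourier_x_derivatives(1)[OF X \<open>k \<noteq> 0\<close>]) (auto simp: norm_mult)
  also have "\<dots> \<le> 2 * B"
    using \<open>1 \<le> s\<close> \<open>0 \<le> B\<close> mult_left_mono[OF \<open>1 \<le> s\<close> \<open>0 \<le> B\<close>] by (simp add: field_simps)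
  finally have tail: "norm (I {-s..s} - I UNIV) \<le> 2 * B"
    by (simp add: norm_minus_commute)
  have boundary: "norm (boundary_term (\<lambda>x. X i x y z) k s) \<le> 2 * B" if "1 \<le> i" "i \<le> 3" for i
    using order_trans[OF norm_boundary_term_le]
      x_derivatives_decay_le_inverse_sum_squares[OF X that, of s y z]
      x_derivatives_decay_le_inverse_sum_squares[OF X that, of "-s" y z] \<open>0 < s\<^sup>2 + y\<^sup>2\<close>
    unfolding B_def by fastforce
  have "norm ((I {-s..s} - I UNIV) / (\<i> * of_real k) ^ 3 - boundary_term (\<lambda>x. X 1 x y z) k s / (\<i> * of_real k) ^ 2
      - boundary_term (\<lambda>x. X 2 x y z) k s / (\<i> * of_real k) ^ 3)
    \<le> 2 * B / \<bar>k\<bar> ^ 3 + 2 * B / \<bar>k\<bar> ^ 2 + 2 * B / \<bar>k\<bar> ^ 3"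
    using tail boundary[of 1] boundary[of 2] \<open>k \<noteq> 0\<close>
    by (intro order_trans[OF norm_triangle_ineq4] add_mono order_trans[OF norm_triangle_ineq4])
      (auto simp: norm_divide norm_power norm_mult intro: divide_right_mono)
  also have "\<dots> = (4 / \<bar>k\<bar> ^ 3 + 2 / \<bar>k\<bar> ^ 2) * B"
    using \<open>k \<noteq> 0\<close> by (simp add: field_simps)
  finally show ?thesis
    using \<open>1 \<le> s\<close> pv_fourier_truncation_error_eq[OF X \<open>k \<noteq> 0\<close>, of s y z] unfolding I_def B_def by simp
qed

lemma norm_integral_ef_slice_le:
  assumes X: "x_derivatives_decay C X" and Y: "x_derivatives_decay C Y"
    and XY: "\<And>x y z. Y 0 y x z = X 0 x y z" and "k \<noteq> 0" "x \<noteq> 0" "0 \<le> r"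
  shows "norm (integral {-r..r} (\<lambda>y. of_real (X 0 x y z) * ef k y)) \<le> (pi + 2) * C / (\<bar>k\<bar> * \<bar>x\<bar>)"
proof -
  have deriv: "((\<lambda>y. X 0 x y z) has_real_derivative Y 1 y x z) (at y)" for y
    using x_derivatives_decayD(1)[OF Y, of 0 x z y] by (simp add: XY)
  have cont: "continuous_on UNIV (\<lambda>y. Y 1 y x z)"
    by (rule continuous_on_x_derivatives_slice(1)[OF Y]) simp
  have "0 < y\<^sup>2 + x\<^sup>2" for y
    using \<open>x \<noteq> 0\<close> by (simp add: add_nonneg_pos)
  then have integral_le: "norm (integral {-r..r} (\<lambda>y. of_real (Y 1 y x z) * ef k y)) \<le> C * pi / \<bar>x\<bar>"
    using \<open>x \<noteq> 0\<close> x_derivatives_decay_le_inverse_sum_squares[OF Y, of 1 _ x z]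
    by (intro norm_integral_symmetric_interval_le integrable_continuous_interval continuous_intros
        continuous_on_subset[OF cont]) (auto simp: norm_mult add.commute)
  have X_le: "\<bar>X 0 x t z\<bar> \<le> C / \<bar>x\<bar>" for t
    using x_derivatives_decay_le_inverse_abs[OF X _ \<open>x \<noteq> 0\<close>, of 0] by simp
  have "norm (of_real (X 0 x r z) * ef k r - of_real (X 0 x (-r) z) * ef k (-r)) \<le> 2 * C / \<bar>x\<bar>"
    using X_le[of r] X_le[of "-r"] by (intro order_trans[OF norm_triangle_ineq4]) (simp add: norm_mult)
  with integral_le have "norm (integral {-r..r} (\<lambda>y. of_real (Y 1 y x z) * ef k y)
      - (of_real (X 0 x r z) * ef k r - of_real (X 0 x (-r) z) * ef k (-r))) \<le> C * pi / \<bar>x\<bar> + 2 * C / \<bar>x\<bar>"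
    by (rule order_trans[OF norm_triangle_ineq4 add_mono])
  moreover have "integral {-r..r} (\<lambda>y. of_real (X 0 x y z) * ef k y)
      = (integral {-r..r} (\<lambda>y. of_real (Y 1 y x z) * ef k y)
        - (of_real (X 0 x r z) * ef k r - of_real (X 0 x (-r) z) * ef k (-r))) / (\<i> * of_real k)"
    using integral_ef_by_parts[OF deriv cont \<open>k \<noteq> 0\<close>, of "-r" r] \<open>0 \<le> r\<close> by simp
  ultimately have "norm (integral {-r..r} (\<lambda>y. of_real (X 0 x y z) * ef k y))
      \<le> (C * pi / \<bar>x\<bar> + 2 * C / \<bar>x\<bar>) / \<bar>k\<bar>"
    by (simp add: norm_divide norm_mult divide_right_mono)
  also have "\<dots> = (pi + 2) * C / (\<bar>k\<bar> * \<bar>x\<bar>)"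
    using \<open>x \<noteq> 0\<close> \<open>k \<noteq> 0\<close> by (simp add: field_simps)
  finally show ?thesis .
qed

lemma norm_integral_boundary_term_ef_le:
  assumes X: "x_derivatives_decay C X" and Y: "x_derivatives_decay C Y"
    and XY: "\<And>x y z. Y 0 y x z = X 0 x y z" and "k2 \<noteq> 0" "0 \<le> r" "0 < s"
  shows "norm (integral {-r..r} (\<lambda>y. boundary_term (\<lambda>x. X 0 x y z) k1 s * ef k2 y))
    \<le> 2 * (pi + 2) * C / (\<bar>k2\<bar> * s)"
proof -
  define J where "J x = integral {-r..r} (\<lambda>y. of_real (X 0 x y z) * ef k2 y)" for x
  have "continuous_on UNIV (\<lambda>y. X 0 x y z)" for x
    using continuous_on_fix_fst[OF continuous_on_x_derivatives_slice(2)[OF X, of 0 z]] by simp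
  then have int: "(\<lambda>y. of_real (X 0 x y z) * ef k2 y) integrable_on {-r..r}" for x
    by (auto intro!: integrable_continuous_interval continuous_intros intro: continuous_on_subset)
  have "(\<lambda>y. boundary_term (\<lambda>x. X 0 x y z) k1 s * ef k2 y)
      = (\<lambda>y. ef k1 s * (of_real (X 0 s y z) * ef k2 y) - ef k1 (-s) * (of_real (X 0 (-s) y z) * ef k2 y))"
    by (auto simp: boundary_term_def algebra_simps)
  then have "integral {-r..r} (\<lambda>y. boundary_term (\<lambda>x. X 0 x y z) k1 s * ef k2 y)
      = ef k1 s * J s - ef k1 (-s) * J (-s)"
    unfolding J_def by (simp add: integral_diff[OF integrable_on_mult_right[OF int] integrable_on_mult_right[OF int]])
  also have "norm \<dots> \<le> norm (J s) + norm (J (-s))"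
    by (rule order_trans[OF norm_triangle_ineq4]) (simp add: norm_mult)
  also have "\<dots> \<le> (pi + 2) * C / (\<bar>k2\<bar> * s) + (pi + 2) * C / (\<bar>k2\<bar> * s)"
    using norm_integral_ef_slice_le[OF X Y XY \<open>k2 \<noteq> 0\<close> _ \<open>0 \<le> r\<close>, of s z]
      norm_integral_ef_slice_le[OF X Y XY \<open>k2 \<noteq> 0\<close> _ \<open>0 \<le> r\<close>, of "-s" z] \<open>0 < s\<close>
    unfolding J_def by (intro add_mono) simp_all
  also have "\<dots> = 2 * (pi + 2) * C / (\<bar>k2\<bar> * s)"
    by (simp add: field_simps)
  finally show ?thesis .
qed

lemma norm_iterated_integral_minus_pv_fourier_le:
  assumes X: "x_derivatives_decay C X" and Y: "x_derivatives_decay C Y"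
    and XY: "\<And>x y z. Y 0 y x z = X 0 x y z" and "k1 \<noteq> 0" "k2 \<noteq> 0" "0 \<le> r" "1 \<le> s"
  shows "norm (integral {-r..r} (\<lambda>y. integral {-s..s} (\<lambda>x. of_real (X 0 x y z) * ef k1 x * ef k2 y))
      - integral {-r..r} (\<lambda>y. pv_fourier (\<lambda>x. X 0 x y z) k1 * ef k2 y))
    \<le> ((4 / \<bar>k1\<bar> ^ 3 + 2 / \<bar>k1\<bar> ^ 2) * C * pi + 2 * (pi + 2) * C / (\<bar>k1\<bar> * \<bar>k2\<bar>)) / s"
proof -
  define c where "c = \<i> * of_real k1"
  define M where "M = (4 / \<bar>k1\<bar> ^ 3 + 2 / \<bar>k1\<bar> ^ 2) * C"
  define T where "T y = integral {-s..s} (\<lambda>x. of_real (X 0 x y z) * ef k1 x)" for y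
  define A where "A y = pv_fourier (\<lambda>x. X 0 x y z) k1" for y
  define B where "B y = boundary_term (\<lambda>x. X 0 x y z) k1 s * ef k2 y" for y
  define E where "E y = (T y - A y + boundary_term (\<lambda>x. X 0 x y z) k1 s / c) * ef k2 y" for y
  have "continuous_on UNIV T" "continuous_on UNIV A" "continuous_on UNIV B"
    unfolding T_def A_def B_def
    by (intro continuous_intros continuous_on_integral_interval_param[OF continuous_on_x_derivatives_ef[OF X]]
        continuous_on_pv_fourier_x_derivatives[OF X \<open>k1 \<noteq> 0\<close>]
        continuous_on_boundary_term[OF continuous_on_x_derivatives_slice(2)[OF X]]; simp)+
  then have int: "(\<lambda>y. A y * ef k2 y) integrable_on {-r..r}" "E integrable_on {-r..r}" "B integrable_on {-r..r}"
    unfolding E_def B_def c_def using \<open>k1 \<noteq> 0\<close>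
    by (auto intro!: integrable_continuous_interval continuous_intros continuous_on_boundary_term
        continuous_on_x_derivatives_slice(2)[OF X] intro: continuous_on_subset)
  have "(\<lambda>y. T y * ef k2 y) = (\<lambda>y. A y * ef k2 y + (E y - B y / c))"
    by (auto simp: E_def B_def algebra_simps)
  then have "integral {-r..r} (\<lambda>y. T y * ef k2 y) - integral {-r..r} (\<lambda>y. A y * ef k2 y)
      = integral {-r..r} E - integral {-r..r} B / c"
    using int by (simp add: integral_add integral_diff integrable_diff integrable_on_divide)
  also have "norm \<dots> \<le> M * pi / s + 2 * (pi + 2) * C / (\<bar>k2\<bar> * s) / \<bar>k1\<bar>"
  proof (rule order_trans[OF norm_triangle_ineq4 add_mono])
    have "norm (E y) \<le> M / (s\<^sup>2 + y\<^sup>2)" for y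
      using norm_pv_fourier_truncation_error_le[OF X \<open>k1 \<noteq> 0\<close> \<open>1 \<le> s\<close>, of y z]
      unfolding E_def T_def A_def M_def c_def by (simp add: norm_mult)
    then show "norm (integral {-r..r} E) \<le> M * pi / s"
      using \<open>1 \<le> s\<close> by (intro norm_integral_symmetric_interval_le int) auto
    have "norm (integral {-r..r} B) \<le> 2 * (pi + 2) * C / (\<bar>k2\<bar> * s)"
      using \<open>1 \<le> s\<close> unfolding B_def by (intro norm_integral_boundary_term_ef_le[OF X Y XY \<open>k2 \<noteq> 0\<close> \<open>0 \<le> r\<close>]) auto
    moreover have "norm (integral {-r..r} B / c) = norm (integral {-r..r} B) / \<bar>k1\<bar>"
      unfolding c_def by (simp add: norm_divide norm_mult)
    ultimately show "norm (integral {-r..r} B / c) \<le> 2 * (pi + 2) * C / (\<bar>k2\<bar> * s) / \<bar>k1\<bar>"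
      by (metis divide_right_mono abs_ge_zero)
  qed
  also have "\<dots> = ((4 / \<bar>k1\<bar> ^ 3 + 2 / \<bar>k1\<bar> ^ 2) * C * pi + 2 * (pi + 2) * C / (\<bar>k1\<bar> * \<bar>k2\<bar>)) / s"
    using \<open>k1 \<noteq> 0\<close> \<open>k2 \<noteq> 0\<close> \<open>1 \<le> s\<close> unfolding M_def by (simp add: field_simps)
  finally show ?thesis
    unfolding T_def A_def by simp
qed

lemma tendsto_iterated_integral_x_derivatives:
  assumes X: "x_derivatives_decay C X" and Y: "x_derivatives_decay C Y"
    and XY: "\<And>x y z. Y 0 y x z = X 0 x y z" and "k1 \<noteq> 0" "k2 \<noteq> 0"
  shows "((\<lambda>(r, s). integral {-r..r} (\<lambda>y. integral {-s..s} (\<lambda>x. of_real (X 0 x y z) * ef k1 x * ef k2 y)))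
    \<longlongrightarrow> integral UNIV (\<lambda>y. pv_fourier (\<lambda>x. X 0 x y z) k1 * ef k2 y)) (at_top \<times>\<^sub>F at_top)"
proof (rule tendsto_prod_at_top_if_dist_le[where v = "\<lambda>r. integral {-r..r} (\<lambda>y. pv_fourier (\<lambda>x. X 0 x y z) k1 * ef k2 y)"])
  let ?K = "(4 / \<bar>k1\<bar> ^ 3 + 2 / \<bar>k1\<bar> ^ 2) * C * pi + 2 * (pi + 2) * C / (\<bar>k1\<bar> * \<bar>k2\<bar>)"
  show "dist (integral {-r..r} (\<lambda>y. integral {-s..s} (\<lambda>x. of_real (X 0 x y z) * ef k1 x * ef k2 y)))
      (integral {-r..r} (\<lambda>y. pv_fourier (\<lambda>x. X 0 x y z) k1 * ef k2 y)) \<le> ?K / s"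
    if "0 \<le> r" "1 \<le> s" for r s
    unfolding dist_norm using norm_iterated_integral_minus_pv_fourier_le[OF X Y XY assms(4,5) that] .
  show "((\<lambda>s. ?K / s) \<longlongrightarrow> 0) at_top"
    by (intro tendsto_divide_0[OF tendsto_const] filterlim_at_top_imp_at_infinity filterlim_ident)
  show "((\<lambda>r. integral {-r..r} (\<lambda>y. pv_fourier (\<lambda>x. X 0 x y z) k1 * ef k2 y))
      \<longlongrightarrow> integral UNIV (\<lambda>y. pv_fourier (\<lambda>x. X 0 x y z) k1 * ef k2 y)) at_top"
    by (intro tendsto_integral_symmetric_interval integral_pv_fourier_x_derivatives_ef(1)[OF X \<open>k1 \<noteq> 0\<close>])
qed

lemma pv_fourier2_x_derivatives:
  assumes X: "x_derivatives_decay C X" and Y: "x_derivatives_decay C Y"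
    and XY: "\<And>x y z. Y 0 y x z = X 0 x y z" and "k1 \<noteq> 0" "k2 \<noteq> 0"
  shows "((\<lambda>(r, s). integral {-r..r} (\<lambda>y. integral {-s..s} (\<lambda>x. of_real (X 0 x y z) * ef k1 x * ef k2 y)))
      \<longlongrightarrow> pv_fourier2 (\<lambda>x y. X 0 x y z) k1 k2) (at_top \<times>\<^sub>F at_top)"
    and "((\<lambda>y. pv_fourier (\<lambda>x. X 0 x y z) k1 * ef k2 y) has_integral pv_fourier2 (\<lambda>x y. X 0 x y z) k1 k2) UNIV"
    and "((\<lambda>x. pv_fourier (\<lambda>y. X 0 x y z) k2 * ef k1 x) has_integral pv_fourier2 (\<lambda>x y. X 0 x y z) k1 k2) UNIV"
proof -
  note lim = tendsto_iterated_integral_x_derivatives[OF X Y XY assms(4,5), of z]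
  have eq: "pv_fourier2 (\<lambda>x y. X 0 x y z) k1 k2 = integral UNIV (\<lambda>y. pv_fourier (\<lambda>x. X 0 x y z) k1 * ef k2 y)"
    unfolding pv_fourier2_def by (rule tendsto_Lim[OF _ lim]) (simp add: prod_filter_eq_bot)
  show "((\<lambda>(r, s). integral {-r..r} (\<lambda>y. integral {-s..s} (\<lambda>x. of_real (X 0 x y z) * ef k1 x * ef k2 y)))
      \<longlongrightarrow> pv_fourier2 (\<lambda>x y. X 0 x y z) k1 k2) (at_top \<times>\<^sub>F at_top)"
    unfolding eq by (rule lim)
  show "((\<lambda>y. pv_fourier (\<lambda>x. X 0 x y z) k1 * ef k2 y) has_integral pv_fourier2 (\<lambda>x y. X 0 x y z) k1 k2) UNIV"
    unfolding eq by (intro integrable_integral integral_pv_fourier_x_derivatives_ef(1)[OF X \<open>k1 \<noteq> 0\<close>])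
  have "continuous_on UNIV (\<lambda>(x, y). of_real (X 0 x y z) * ef k2 y * ef k1 x)"
    using continuous_on_x_derivatives_slice(2)[OF X, of 0 z]
    by (auto simp: case_prod_unfold intro!: continuous_intros continuous_on_compose2[OF continuous_on_ef])
  from integral_symmetric_intervals_swap[OF this]
  have swap: "integral {-r..r} (\<lambda>x. integral {-s..s} (\<lambda>y. of_real (X 0 x y z) * ef k2 y * ef k1 x))
      = integral {-s..s} (\<lambda>y. integral {-r..r} (\<lambda>x. of_real (X 0 x y z) * ef k1 x * ef k2 y))" for r s
    by (simp add: ac_simps)
  have "((\<lambda>(r, s). integral {-r..r} (\<lambda>x. integral {-s..s} (\<lambda>y. of_real (X 0 x y z) * ef k2 y * ef k1 x)))
      \<longlongrightarrow> integral UNIV (\<lambda>x. pv_fourier (\<lambda>y. X 0 x y z) k2 * ef k1 x)) (at_top \<times>\<^sub>F at_top)"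
    using tendsto_iterated_integral_x_derivatives[OF Y X _ assms(5,4), of z] by (simp add: XY)
  then have "((\<lambda>(r, s). integral {-r..r} (\<lambda>y. integral {-s..s} (\<lambda>x. of_real (X 0 x y z) * ef k1 x * ef k2 y)))
      \<longlongrightarrow> integral UNIV (\<lambda>x. pv_fourier (\<lambda>y. X 0 x y z) k2 * ef k1 x)) (at_top \<times>\<^sub>F at_top)"
    unfolding swap by (rule tendsto_prod_swap)
  then have "pv_fourier2 (\<lambda>x y. X 0 x y z) k1 k2 = integral UNIV (\<lambda>x. pv_fourier (\<lambda>y. X 0 x y z) k2 * ef k1 x)"
    unfolding eq by (intro tendsto_unique[OF _ lim]) (simp add: prod_filter_eq_bot)
  then show "((\<lambda>x. pv_fourier (\<lambda>y. X 0 x y z) k2 * ef k1 x) has_integral pv_fourier2 (\<lambda>x y. X 0 x y z) k1 k2) UNIV"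
    using integrable_integral[OF integral_pv_fourier_x_derivatives_ef(1)[OF Y \<open>k2 \<noteq> 0\<close>, of z k1]]
    by (simp add: XY)
qed

lemma mod_dec1_pv_fourier2_x_derivatives:
  assumes X: "x_derivatives_decay C X" and Y: "x_derivatives_decay C Y"
    and XY: "\<And>x y z. Y 0 y x z = X 0 x y z" and "k1 \<noteq> 0" "k2 \<noteq> 0"
  shows "mod_dec1 (\<lambda>z. pv_fourier2 (\<lambda>x y. X 0 x y z) k1 k2)"
proof (rule mod_dec1_if_le)
  fix z
  show "norm (pv_fourier2 (\<lambda>x y. X 0 x y z) k1 k2) \<le> C * pi\<^sup>2 / \<bar>k1\<bar> ^ 3 / (1 + z\<^sup>2)"
    using integral_pv_fourier_x_derivatives_ef(2)[OF X \<open>k1 \<noteq> 0\<close>, of z k2]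
    unfolding pv_fourier2_x_derivatives(2)[OF assms, THEN integral_unique] .
qed

section \<open>Smooth functions with decaying derivatives\<close>

lemma smooth3_has_real_derivative_pd3ijk:
  assumes "smooth3 f"
  shows "((\<lambda>t. pd3ijk i 0 0 f t y z) has_real_derivative pd3ijk (Suc i) 0 0 f x y z) (at x)"
    and "((\<lambda>t. pd3ijk 0 i 0 f x t z) has_real_derivative pd3ijk 0 (Suc i) 0 f x y z) (at y)"
    and "((\<lambda>t. pd3ijk 0 0 i f x y t) has_real_derivative pd3ijk 0 0 (Suc i) f x y z) (at z)"
  using assms unfolding smooth3_def pd3ijk_def
  by (simp_all add: pdx_def pdy_def pdz_def DERIV_deriv_iff_real_differentiable)

lemma smooth3_decay3_pd3ijk_bound:
  assumes "smooth3 f" "decay3 f"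
  obtains C where "\<And>i j k x y z. i \<le> 3 \<Longrightarrow> j \<le> 3 \<Longrightarrow> k \<le> 3 \<Longrightarrow>
    \<bar>pd3ijk i j k f x y z\<bar> \<le> C / sqrt (1 + x\<^sup>2 + y\<^sup>2 + z\<^sup>2) ^ (i + j + k + 1)"
proof -
  have "mod_dec3 (i + j + k + 1) (pd3ijk i j k f)" for i j k
    using \<open>decay3 f\<close> unfolding decay3_def by (cases "i + j + k = 0") (auto simp: pd3ijk_def)
  moreover have "continuous_on UNIV (\<lambda>(x, y, z). pd3ijk i j k f x y z)" for i j k
    using \<open>smooth3 f\<close> unfolding smooth3_def pd3ijk_def by blast
  ultimately have "\<forall>t \<in> {..3} \<times> {..3} \<times> {..3}. \<exists>C. \<forall>x y z.
      \<bar>pd3ijk (fst t) (fst (snd t)) (snd (snd t)) f x y z\<bar>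
        \<le> C / sqrt (1 + x\<^sup>2 + y\<^sup>2 + z\<^sup>2) ^ (fst t + fst (snd t) + snd (snd t) + 1)"
    using mod_dec3_weighted_bound by blast
  then obtain Cs where "\<forall>t \<in> {..3} \<times> {..3} \<times> {..3}. \<forall>x y z.
      \<bar>pd3ijk (fst t) (fst (snd t)) (snd (snd t)) f x y z\<bar>
        \<le> Cs t / sqrt (1 + x\<^sup>2 + y\<^sup>2 + z\<^sup>2) ^ (fst t + fst (snd t) + snd (snd t) + 1)"
    by (metis bchoice)
  then have Cs: "\<bar>pd3ijk i j k f x y z\<bar> \<le> Cs (i, j, k) / sqrt (1 + x\<^sup>2 + y\<^sup>2 + z\<^sup>2) ^ (i + j + k + 1)"
    if "i \<le> 3" "j \<le> 3" "k \<le> 3" for i j k x y z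
    using that by fastforce
  define C where "C = Max (Cs ` ({..3} \<times> {..3} \<times> {..3}))"
  have "Cs (i, j, k) \<le> C" if "i \<le> 3" "j \<le> 3" "k \<le> 3" for i j k
    unfolding C_def using that by (intro Max_ge) auto
  then show ?thesis
    using Cs by (intro that order_trans[OF Cs] divide_right_mono) auto
qed

lemma smooth3_decay3_x_derivatives_decay:
  assumes "smooth3 f" "decay3 f"
  obtains C where "x_derivatives_decay C (\<lambda>i x y z. pd3ijk i 0 0 f x y z)"
    and "x_derivatives_decay C (\<lambda>i y x z. pd3ijk 0 i 0 f x y z)"
    and "x_derivatives_decay C (\<lambda>i z x y. pd3ijk 0 0 i f x y z)"
proof -
  obtain C where C: "\<And>i j k x y z. i \<le> 3 \<Longrightarrow> j \<le> 3 \<Longrightarrow> k \<le> 3 \<Longrightarrow>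
    \<bar>pd3ijk i j k f x y z\<bar> \<le> C / sqrt (1 + x\<^sup>2 + y\<^sup>2 + z\<^sup>2) ^ (i + j + k + 1)"
    using smooth3_decay3_pd3ijk_bound[OF assms] by blast
  have cont: "continuous_on UNIV (\<lambda>(x, y, z). pd3ijk i j k f x y z)" for i j k
    using \<open>smooth3 f\<close> unfolding smooth3_def pd3ijk_def by blast
  show ?thesis
  proof (rule that; unfold x_derivatives_decay_def; intro conjI allI impI)
    fix i :: nat and x y z :: real
    assume "i \<le> 3"
    show "\<bar>pd3ijk i 0 0 f x y z\<bar> \<le> C / sqrt (1 + x\<^sup>2 + y\<^sup>2 + z\<^sup>2) ^ Suc i"
      using C[of i 0 0 x y z] \<open>i \<le> 3\<close> by simp
    show "\<bar>pd3ijk 0 i 0 f y x z\<bar> \<le> C / sqrt (1 + x\<^sup>2 + y\<^sup>2 + z\<^sup>2) ^ Suc i"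
      using C[of 0 i 0 y x z] \<open>i \<le> 3\<close> by (simp add: ac_simps)
    show "\<bar>pd3ijk 0 0 i f y z x\<bar> \<le> C / sqrt (1 + x\<^sup>2 + y\<^sup>2 + z\<^sup>2) ^ Suc i"
      using C[of 0 0 i y z x] \<open>i \<le> 3\<close> by (simp add: ac_simps)
  qed (use cont continuous_on_permute3[OF cont] smooth3_has_real_derivative_pd3ijk[OF \<open>smooth3 f\<close>] in auto)
qed

theorem lemma17:
  fixes f :: "real \<Rightarrow> real \<Rightarrow> real \<Rightarrow> real"
  assumes "quasi_normal3 f \<or> quasi_split_normal3 f"
  shows "\<exists>(A::real \<Rightarrow> real \<Rightarrow> real \<Rightarrow> complex) (B::real \<Rightarrow> real \<Rightarrow> real \<Rightarrow> complex)
           (C::real \<Rightarrow> real \<Rightarrow> real \<Rightarrow> complex) (F::real \<Rightarrow> real \<Rightarrow> real \<Rightarrow> complex)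
           (G::real \<Rightarrow> real \<Rightarrow> real \<Rightarrow> complex) (H::real \<Rightarrow> real \<Rightarrow> real \<Rightarrow> complex).
    \<comment> \<open>(a)\<close>
    (\<forall>k1 y z. k1 \<noteq> 0 \<longrightarrow>
       ((\<lambda>r. integral {-r..r} (\<lambda>x. complex_of_real (f x y z) * ef k1 x)) \<longlongrightarrow> A k1 y z) at_top) \<and>
    (\<forall>x k2 z. k2 \<noteq> 0 \<longrightarrow>
       ((\<lambda>r. integral {-r..r} (\<lambda>y. complex_of_real (f x y z) * ef k2 y)) \<longlongrightarrow> B x k2 z) at_top) \<and>
    (\<forall>x y k3. k3 \<noteq> 0 \<longrightarrow>
       ((\<lambda>r. integral {-r..r} (\<lambda>z. complex_of_real (f x y z) * ef k3 z)) \<longlongrightarrow> C x y k3) at_top) \<and>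
    (\<forall>k1. k1 \<noteq> 0 \<longrightarrow> mod_dec2 {} 3 (\<lambda>y z. A k1 y z)) \<and>
    (\<forall>k2. k2 \<noteq> 0 \<longrightarrow> mod_dec2 {} 3 (\<lambda>x z. B x k2 z)) \<and>
    (\<forall>k3. k3 \<noteq> 0 \<longrightarrow> mod_dec2 {} 3 (\<lambda>x y. C x y k3)) \<and>
    \<comment> \<open>(b)\<close>
    (\<forall>k1 k2 z. k1 \<noteq> 0 \<and> k2 \<noteq> 0 \<longrightarrow>
       ((\<lambda>(r,s). integral {-r..r} (\<lambda>y. integral {-s..s}
           (\<lambda>x. complex_of_real (f x y z) * ef k1 x * ef k2 y))) \<longlongrightarrow> F k1 k2 z) (at_top \<times>\<^sub>F at_top)) \<and>
    (\<forall>k1 y k3. k1 \<noteq> 0 \<and> k3 \<noteq> 0 \<longrightarrow>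
       ((\<lambda>(r,s). integral {-r..r} (\<lambda>z. integral {-s..s}
           (\<lambda>x. complex_of_real (f x y z) * ef k1 x * ef k3 z))) \<longlongrightarrow> G k1 y k3) (at_top \<times>\<^sub>F at_top)) \<and>
    (\<forall>x k2 k3. k2 \<noteq> 0 \<and> k3 \<noteq> 0 \<longrightarrow>
       ((\<lambda>(r,s). integral {-r..r} (\<lambda>z. integral {-s..s}
           (\<lambda>y. complex_of_real (f x y z) * ef k2 y * ef k3 z))) \<longlongrightarrow> H x k2 k3) (at_top \<times>\<^sub>F at_top)) \<and>
    (\<forall>k1 k2. k1 \<noteq> 0 \<and> k2 \<noteq> 0 \<longrightarrow> mod_dec1 (\<lambda>z. F k1 k2 z)) \<and>
    (\<forall>k1 k3. k1 \<noteq> 0 \<and> k3 \<noteq> 0 \<longrightarrow> mod_dec1 (\<lambda>y. G k1 y k3)) \<and>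
    (\<forall>k2 k3. k2 \<noteq> 0 \<and> k3 \<noteq> 0 \<longrightarrow> mod_dec1 (\<lambda>x. H x k2 k3)) \<and>
    \<comment> \<open>(c)\<close>
    (\<forall>k1 k2 z. k1 \<noteq> 0 \<and> k2 \<noteq> 0 \<longrightarrow>
       ((\<lambda>y. A k1 y z * ef k2 y) has_integral F k1 k2 z) UNIV \<and>
       ((\<lambda>x. B x k2 z * ef k1 x) has_integral F k1 k2 z) UNIV) \<and>
    (\<forall>k1 y k3. k1 \<noteq> 0 \<and> k3 \<noteq> 0 \<longrightarrow>
       ((\<lambda>z. A k1 y z * ef k3 z) has_integral G k1 y k3) UNIV \<and>
       ((\<lambda>x. C x y k3 * ef k1 x) has_integral G k1 y k3) UNIV) \<and>
    (\<forall>x k2 k3. k2 \<noteq> 0 \<and> k3 \<noteq> 0 \<longrightarrow>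
       ((\<lambda>z. B x k2 z * ef k3 z) has_integral H x k2 k3) UNIV \<and>
       ((\<lambda>y. C x y k3 * ef k2 y) has_integral H x k2 k3) UNIV)"
proof -
  from assms have "smooth3 f" "decay3 f"
    by (auto simp: quasi_normal3_def quasi_split_normal3_def)
  then obtain K where X: "x_derivatives_decay K (\<lambda>i x y z. pd3ijk i 0 0 f x y z)"
    and Y: "x_derivatives_decay K (\<lambda>i y x z. pd3ijk 0 i 0 f x y z)"
    and Z: "x_derivatives_decay K (\<lambda>i z x y. pd3ijk 0 0 i f x y z)"
    by (rule smooth3_decay3_x_derivatives_decay)
  have pd3ijk_000: "pd3ijk 0 0 0 f = f"
    by (simp add: pd3ijk_def)
  note one_dim = pv_fourier_x_derivatives(2) mod_dec2_pv_fourier_x_derivatives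
  note two_dim = pv_fourier2_x_derivatives mod_dec1_pv_fourier2_x_derivatives
  \<comment> \<open>F, G and H are the iterated transforms of f with its arguments taken in the orders
    (x, y, z), (x, z, y) and (y, z, x).\<close>
  note transforms = one_dim[OF X, unfolded pd3ijk_000] one_dim[OF Y, unfolded pd3ijk_000]
    one_dim[OF Z, unfolded pd3ijk_000]
    two_dim[OF X Y refl, unfolded pd3ijk_000]
    two_dim[OF x_derivatives_decay_swap[OF X] Z refl, unfolded pd3ijk_000]
    two_dim[OF x_derivatives_decay_swap[OF Y] x_derivatives_decay_swap[OF Z] refl, unfolded pd3ijk_000]
  show ?thesis
    by (rule exI[of _ "\<lambda>k1 y z. pv_fourier (\<lambda>x. f x y z) k1"],
        rule exI[of _ "\<lambda>x k2 z. pv_fourier (\<lambda>y. f x y z) k2"],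
        rule exI[of _ "\<lambda>x y k3. pv_fourier (\<lambda>z. f x y z) k3"],
        rule exI[of _ "\<lambda>k1 k2 z. pv_fourier2 (\<lambda>x y. f x y z) k1 k2"],
        rule exI[of _ "\<lambda>k1 y k3. pv_fourier2 (\<lambda>x z. f x y z) k1 k3"],
        rule exI[of _ "\<lambda>x k2 k3. pv_fourier2 (\<lambda>y z. f x y z) k2 k3"])
      (blast intro: transforms)
qed

end
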